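(* Let $P$ be a quantum principal bundle with structure Hopf algebra $H$ (invertible antipode $S$) over $M$, and let $\omega:H\to\Omega^1P$ be a connection. The following are equivalent: (i) $\omega$ is a left strong connection; (ii) $(\Delta_L\otimes\mathrm{id})(\omega(h))=h\otimes1\otimes1-\epsilon(h)1\otimes1\otimes1+h_{(1)}\otimes\omega(h_{(2)})$ for all $h\in H$; (iii) $(\mathrm{id}\otimes\Delta_R)(\omega(h))=1\otimes1\otimes h-\epsilon(h)1\otimes1\otimes1+\omega(h_{(1)})\otimes h_{(2)}$ for all $h\in H$. Moreover, in this case $\bar D=(\mathrm{id}-\bar\Pi_\omega)d$ preserves right strong tensoriality: $(\mathrm{id}-\bar\Pi_\omega)(dp)\in P\,\Omega^1M$ for all $p\in P$.
   Context: $k$ is a field. For a unital algebra $A$, $\Omega^1A=\ker(\mu:A\otimes A\to A)$ with $da=1\otimes a-a\otimes1$; forms are multiplied by concatenation (multiplying adjacent tensor factors). A quantum principal bundle: $H$ a Hopf algebra ($\Delta h=h_{(1)}\otimes h_{(2)}$, counit $\epsilon$, invertible antipode $S$); $P$ a right $H$-comodule algebra with $\Delta_R(p)=p^{(1)}\otimes p^{(2)}$; $M=\{p:\Delta_Rp=p\otimes1\}$; $P$ flat over $M$; $P\otimes_MP\to P\otimes H$, $p\otimes p'\mapsto pp'^{(1)}\otimes p'^{(2)}$ bijective. The associated left coaction of $H^{\rm op}$ on $P$ is $\Delta_L(p)=S^{-1}(p^{(2)})\otimes p^{(1)}$, written $\Delta_L(p)=p^{\tilde{(1)}}\otimes p^{\tilde{(2)}}$.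 In (ii), $\Delta_L$ acts on the first tensor factor of $\omega(h)\in P\otimes P$; in (iii), $\Delta_R$ acts on the second. A connection is a linear $\omega:H\to\Omega^1P\subset P\otimes P$ with $\omega(1)=0$, $\sum\omega_\alpha\omega^\alpha{}^{(1)}\otimes\omega^\alpha{}^{(2)}=1\otimes(h-\epsilon(h)1)$ where $\omega(h)=\sum\omega_\alpha\otimes\omega^\alpha$, and $\Delta_R(\omega(h))=\omega(h_{(2)})\otimes S(h_{(1)})h_{(3)}$ (tensor product coaction on $P\otimes P$). $\Pi_\omega(\sum p\otimes p')=\sum pp'^{(1)}\omega(p'^{(2)})$ and $\bar\Pi_\omega(\sum p\otimes p')=\sum\omega(p^{\tilde{(1)}})p^{\tilde{(2)}}p'$ on $\Omega^1P$. $\omega$ is left strong if $(\mathrm{id}-\Pi_\omega)(dp)\in(\Omega^1M)P$ for all $p\in P$. *)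

theory Defs
  imports Complex_Main "HOL-Library.Poly_Mapping"
begin

text \<open>A tensor in V (x) W (over the field 'k) is represented by a list of pairs [(v1,w1),...],
  standing for the sum of the elementary tensors v_i (x) w_i (scalars absorbed into v_i).
  The tensor product is the free 'k-module on pairs modulo the span of the bilinearity
  relations (and, for balanced tensor products, of extra generators).\<close>

definition pm_of :: "'a list \<Rightarrow> ('a \<Rightarrow>\<^sub>0 'k::comm_ring_1)" where
  "pm_of xs = sum_list (map (\<lambda>x. Poly_Mapping.single x 1) xs)"

inductive_set span_gen ::
  "('k::field \<Rightarrow> 'a::plus \<Rightarrow> 'a) \<Rightarrow> ('k \<Rightarrow> 'b::plus \<Rightarrow> 'b) \<Rightarrow> 'a set \<Rightarrow> 'b set
   \<Rightarrow> (('a \<times> 'b) \<Rightarrow>\<^sub>0 'k) set \<Rightarrow> (('a \<times> 'b) \<Rightarrow>\<^sub>0 'k) set"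
  for sA sB A B G where
  zero: "0 \<in> span_gen sA sB A B G"
| addL: "\<lbrakk>a \<in> A; a' \<in> A; b \<in> B\<rbrakk> \<Longrightarrow> Poly_Mapping.single (a + a', b) 1
      - Poly_Mapping.single (a, b) 1 - Poly_Mapping.single (a', b) 1 \<in> span_gen sA sB A B G"
| addR: "\<lbrakk>a \<in> A; b \<in> B; b' \<in> B\<rbrakk> \<Longrightarrow> Poly_Mapping.single (a, b + b') 1
      - Poly_Mapping.single (a, b) 1 - Poly_Mapping.single (a, b') 1 \<in> span_gen sA sB A B G"
| smulL: "\<lbrakk>a \<in> A; b \<in> B\<rbrakk> \<Longrightarrow> Poly_Mapping.single (sA c a, b) 1
      - Poly_Mapping.single (a, b) c \<in> span_gen sA sB A B G"
| smulR: "\<lbrakk>a \<in> A; b \<in> B\<rbrakk> \<Longrightarrow> Poly_Mapping.single (a, sB c b) 1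
      - Poly_Mapping.single (a, b) c \<in> span_gen sA sB A B G"
| gen: "g \<in> G \<Longrightarrow> g \<in> span_gen sA sB A B G"
| add: "\<lbrakk>x \<in> span_gen sA sB A B G; y \<in> span_gen sA sB A B G\<rbrakk> \<Longrightarrow> x + y \<in> span_gen sA sB A B G"
| scale: "x \<in> span_gen sA sB A B G \<Longrightarrow> Poly_Mapping.map ((*) c) x \<in> span_gen sA sB A B G"

text \<open>Balancing generators for a tensor product over a subring R (all inside one ring).\<close>
definition bal_gens :: "'a::ring set \<Rightarrow> 'a set \<Rightarrow> 'a set \<Rightarrow> (('a \<times> 'a) \<Rightarrow>\<^sub>0 'k::comm_ring_1) set" where
  "bal_gens A R B = {Poly_Mapping.single (a * r, b) 1 - Poly_Mapping.single (a, r * b) 1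
                     | a r b. a \<in> A \<and> r \<in> R \<and> b \<in> B}"

definition teq2 :: "('k::field \<Rightarrow> 'a::plus \<Rightarrow> 'a) \<Rightarrow> ('k \<Rightarrow> 'b::plus \<Rightarrow> 'b)
    \<Rightarrow> ('a \<times> 'b) list \<Rightarrow> ('a \<times> 'b) list \<Rightarrow> bool" where
  "teq2 sA sB xs ys \<longleftrightarrow> pm_of xs - pm_of ys \<in> span_gen sA sB UNIV UNIV {}"

inductive_set tens3_rel ::
  "('k::field \<Rightarrow> 'a::plus \<Rightarrow> 'a) \<Rightarrow> ('k \<Rightarrow> 'b::plus \<Rightarrow> 'b) \<Rightarrow> ('k \<Rightarrow> 'c::plus \<Rightarrow> 'c)
   \<Rightarrow> (('a \<times> 'b \<times> 'c) \<Rightarrow>\<^sub>0 'k) set"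
  for sA sB sC where
  zero: "0 \<in> tens3_rel sA sB sC"
| add1: "Poly_Mapping.single (a + a', b, c) 1 - Poly_Mapping.single (a, b, c) 1
      - Poly_Mapping.single (a', b, c) 1 \<in> tens3_rel sA sB sC"
| add2: "Poly_Mapping.single (a, b + b', c) 1 - Poly_Mapping.single (a, b, c) 1
      - Poly_Mapping.single (a, b', c) 1 \<in> tens3_rel sA sB sC"
| add3: "Poly_Mapping.single (a, b, c + c') 1 - Poly_Mapping.single (a, b, c) 1
      - Poly_Mapping.single (a, b, c') 1 \<in> tens3_rel sA sB sC"
| smul1: "Poly_Mapping.single (sA k a, b, c) 1 - Poly_Mapping.single (a, b, c) k \<in> tens3_rel sA sB sC"
| smul2: "Poly_Mapping.single (a, sB k b, c) 1 - Poly_Mapping.single (a, b, c) k \<in> tens3_rel sA sB sC"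
| smul3: "Poly_Mapping.single (a, b, sC k c) 1 - Poly_Mapping.single (a, b, c) k \<in> tens3_rel sA sB sC"
| add: "\<lbrakk>x \<in> tens3_rel sA sB sC; y \<in> tens3_rel sA sB sC\<rbrakk> \<Longrightarrow> x + y \<in> tens3_rel sA sB sC"
| scale: "x \<in> tens3_rel sA sB sC \<Longrightarrow> Poly_Mapping.map ((*) k) x \<in> tens3_rel sA sB sC"

definition teq3 :: "('k::field \<Rightarrow> 'a::plus \<Rightarrow> 'a) \<Rightarrow> ('k \<Rightarrow> 'b::plus \<Rightarrow> 'b) \<Rightarrow> ('k \<Rightarrow> 'c::plus \<Rightarrow> 'c)
    \<Rightarrow> ('a \<times> 'b \<times> 'c) list \<Rightarrow> ('a \<times> 'b \<times> 'c) list \<Rightarrow> bool" where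
  "teq3 sA sB sC xs ys \<longleftrightarrow> pm_of xs - pm_of ys \<in> tens3_rel sA sB sC"

definition lift_left :: "('a \<Rightarrow> ('x \<times> 'y) list) \<Rightarrow> ('a \<times> 'b) list \<Rightarrow> ('x \<times> 'y \<times> 'b) list" where
  "lift_left f xs = concat (map (\<lambda>(a, b). map (\<lambda>(x, y). (x, y, b)) (f a)) xs)"

definition lift_right :: "('b \<Rightarrow> ('x \<times> 'y) list) \<Rightarrow> ('a \<times> 'b) list \<Rightarrow> ('a \<times> 'x \<times> 'y) list" where
  "lift_right f xs = concat (map (\<lambda>(a, b). map (\<lambda>(x, y). (a, x, y)) (f b)) xs)"

definition tmult :: "('a::times \<times> 'b::times) list \<Rightarrow> ('a \<times> 'b) list \<Rightarrow> ('a \<times> 'b) list" where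
  "tmult xs ys = concat (map (\<lambda>(a, b). map (\<lambda>(c, d). (a * c, b * d)) ys) xs)"

definition k_algebra :: "('k::field \<Rightarrow> 'a::ring_1 \<Rightarrow> 'a) \<Rightarrow> bool" where
  "k_algebra s \<longleftrightarrow> Vector_Spaces.vector_space s \<and>
     (\<forall>c x y. s c (x * y) = s c x * y \<and> s c (x * y) = x * s c y)"

definition hopf_algebra :: "('k::field \<Rightarrow> 'h::ring_1 \<Rightarrow> 'h) \<Rightarrow> ('h \<Rightarrow> ('h \<times> 'h) list)
    \<Rightarrow> ('h \<Rightarrow> 'k) \<Rightarrow> ('h \<Rightarrow> 'h) \<Rightarrow> bool" where
  "hopf_algebra sH cop eps S \<longleftrightarrow>
     k_algebra sH
   \<comment> \<open>coproduct: linear, algebra map, coassociative\<close>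
   \<and> (\<forall>x y. teq2 sH sH (cop (x + y)) (cop x @ cop y))
   \<and> (\<forall>c x. teq2 sH sH (cop (sH c x)) (map (\<lambda>(a, b). (sH c a, b)) (cop x)))
   \<and> (\<forall>x y. teq2 sH sH (cop (x * y)) (tmult (cop x) (cop y)))
   \<and> teq2 sH sH (cop 1) [(1, 1)]
   \<and> (\<forall>x. teq3 sH sH sH (lift_left cop (cop x)) (lift_right cop (cop x)))
   \<comment> \<open>counit: linear, algebra map, counit axioms\<close>
   \<and> (\<forall>x y. eps (x + y) = eps x + eps y) \<and> (\<forall>c x. eps (sH c x) = c * eps x)
   \<and> (\<forall>x y. eps (x * y) = eps x * eps y) \<and> eps 1 = 1
   \<and> (\<forall>x. sum_list (map (\<lambda>(a, b). sH (eps a) b) (cop x)) = x)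
   \<and> (\<forall>x. sum_list (map (\<lambda>(a, b). sH (eps b) a) (cop x)) = x)
   \<comment> \<open>antipode: linear, antipode axioms\<close>
   \<and> (\<forall>x y. S (x + y) = S x + S y) \<and> (\<forall>c x. S (sH c x) = sH c (S x))
   \<and> (\<forall>x. sum_list (map (\<lambda>(a, b). S a * b) (cop x)) = sH (eps x) 1)
   \<and> (\<forall>x. sum_list (map (\<lambda>(a, b). a * S b) (cop x)) = sH (eps x) 1)"

definition right_comodule_algebra :: "('k::field \<Rightarrow> 'p::ring_1 \<Rightarrow> 'p) \<Rightarrow> ('k \<Rightarrow> 'h::ring_1 \<Rightarrow> 'h)
    \<Rightarrow> ('h \<Rightarrow> ('h \<times> 'h) list) \<Rightarrow> ('h \<Rightarrow> 'k) \<Rightarrow> ('p \<Rightarrow> ('p \<times> 'h) list) \<Rightarrow> bool" where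
  "right_comodule_algebra sP sH cop eps DR \<longleftrightarrow>
     k_algebra sP
   \<and> (\<forall>x y. teq2 sP sH (DR (x + y)) (DR x @ DR y))
   \<and> (\<forall>c x. teq2 sP sH (DR (sP c x)) (map (\<lambda>(a, g). (sP c a, g)) (DR x)))
   \<and> (\<forall>x. teq3 sP sH sH (lift_left DR (DR x)) (lift_right cop (DR x)))
   \<and> (\<forall>x. sum_list (map (\<lambda>(a, g). sP (eps g) a) (DR x)) = x)
   \<and> (\<forall>x y. teq2 sP sH (DR (x * y)) (tmult (DR x) (DR y)))
   \<and> teq2 sP sH (DR 1) [(1, 1)]"

definition coinv :: "('k::field \<Rightarrow> 'p::ring_1 \<Rightarrow> 'p) \<Rightarrow> ('k \<Rightarrow> 'h::ring_1 \<Rightarrow> 'h)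
    \<Rightarrow> ('p \<Rightarrow> ('p \<times> 'h) list) \<Rightarrow> 'p set" where
  "coinv sP sH DR = {p. teq2 sP sH (DR p) [(p, 1)]}"

definition can_map :: "('p::ring_1 \<Rightarrow> ('p \<times> 'h) list) \<Rightarrow> ('p \<times> 'p) list \<Rightarrow> ('p \<times> 'h) list" where
  "can_map DR xs = concat (map (\<lambda>(p, q). map (\<lambda>(a, g). (p * a, g)) (DR q)) xs)"

definition teqM :: "('k::field \<Rightarrow> 'p::ring_1 \<Rightarrow> 'p) \<Rightarrow> 'p set \<Rightarrow> ('p \<times> 'p) list \<Rightarrow> ('p \<times> 'p) list \<Rightarrow> bool" where
  "teqM sP M xs ys \<longleftrightarrow> pm_of xs - pm_of ys \<in> span_gen sP sP UNIV UNIV (bal_gens UNIV M UNIV)"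

definition galois :: "('k::field \<Rightarrow> 'p::ring_1 \<Rightarrow> 'p) \<Rightarrow> ('k \<Rightarrow> 'h::ring_1 \<Rightarrow> 'h)
    \<Rightarrow> ('p \<Rightarrow> ('p \<times> 'h) list) \<Rightarrow> bool" where
  "galois sP sH DR \<longleftrightarrow>
     (\<forall>xs ys. teq2 sP sH (can_map DR xs) (can_map DR ys) \<longrightarrow> teqM sP (coinv sP sH DR) xs ys)
   \<and> (\<forall>zs. \<exists>xs. teq2 sP sH (can_map DR xs) zs)"

section \<open>Flatness (ideal criterion)\<close>

definition right_ideal_of :: "'p::ring_1 set \<Rightarrow> 'p set \<Rightarrow> bool" where
  "right_ideal_of M I \<longleftrightarrow> I \<subseteq> M \<and> 0 \<in> I \<and> (\<forall>x\<in>I. \<forall>y\<in>I. x + y \<in> I) \<and> (\<forall>x\<in>I. - x \<in> I)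
     \<and> (\<forall>x\<in>I. \<forall>r\<in>M. x * r \<in> I)"

definition left_ideal_of :: "'p::ring_1 set \<Rightarrow> 'p set \<Rightarrow> bool" where
  "left_ideal_of M I \<longleftrightarrow> I \<subseteq> M \<and> 0 \<in> I \<and> (\<forall>x\<in>I. \<forall>y\<in>I. x + y \<in> I) \<and> (\<forall>x\<in>I. - x \<in> I)
     \<and> (\<forall>x\<in>I. \<forall>r\<in>M. r * x \<in> I)"

text \<open>P is flat as a left M-module: for every right ideal I of M, I (x)_M P \<rightarrow> P is injective.\<close>
definition flat_left :: "('k::field \<Rightarrow> 'p::ring_1 \<Rightarrow> 'p) \<Rightarrow> 'p set \<Rightarrow> bool" where
  "flat_left sP M \<longleftrightarrow> (\<forall>I xs. right_ideal_of M I \<longrightarrow> set xs \<subseteq> I \<times> UNIV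
      \<longrightarrow> sum_list (map (\<lambda>(m, p). m * p) xs) = 0
      \<longrightarrow> pm_of xs \<in> span_gen sP sP I UNIV (bal_gens I M UNIV))"

text \<open>P is flat as a right M-module: for every left ideal J of M, P (x)_M J \<rightarrow> P is injective.\<close>
definition flat_right :: "('k::field \<Rightarrow> 'p::ring_1 \<Rightarrow> 'p) \<Rightarrow> 'p set \<Rightarrow> bool" where
  "flat_right sP M \<longleftrightarrow> (\<forall>J xs. left_ideal_of M J \<longrightarrow> set xs \<subseteq> UNIV \<times> J
      \<longrightarrow> sum_list (map (\<lambda>(p, m). p * m) xs) = 0
      \<longrightarrow> pm_of xs \<in> span_gen sP sP UNIV J (bal_gens UNIV M J))"

definition qpb :: "('k::field \<Rightarrow> 'p::ring_1 \<Rightarrow> 'p) \<Rightarrow> ('k \<Rightarrow> 'h::ring_1 \<Rightarrow> 'h)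
    \<Rightarrow> ('h \<Rightarrow> ('h \<times> 'h) list) \<Rightarrow> ('h \<Rightarrow> 'k) \<Rightarrow> ('h \<Rightarrow> 'h) \<Rightarrow> ('p \<Rightarrow> ('p \<times> 'h) list) \<Rightarrow> bool" where
  "qpb sP sH cop eps S DR \<longleftrightarrow>
     hopf_algebra sH cop eps S \<and> bij S
   \<and> right_comodule_algebra sP sH cop eps DR
   \<and> flat_left sP (coinv sP sH DR) \<and> flat_right sP (coinv sP sH DR)
   \<and> galois sP sH DR"

definition coact2 :: "('p::ring_1 \<Rightarrow> ('p \<times> 'h::ring_1) list) \<Rightarrow> ('p \<times> 'p) list \<Rightarrow> ('p \<times> 'p \<times> 'h) list" where
  "coact2 DR xs = concat (map (\<lambda>(a, b). concat (map (\<lambda>(x, g).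
       map (\<lambda>(y, g'). (x, y, g * g')) (DR b)) (DR a))) xs)"

definition connection :: "('k::field \<Rightarrow> 'p::ring_1 \<Rightarrow> 'p) \<Rightarrow> ('k \<Rightarrow> 'h::ring_1 \<Rightarrow> 'h)
    \<Rightarrow> ('h \<Rightarrow> ('h \<times> 'h) list) \<Rightarrow> ('h \<Rightarrow> 'k) \<Rightarrow> ('h \<Rightarrow> 'h) \<Rightarrow> ('p \<Rightarrow> ('p \<times> 'h) list)
    \<Rightarrow> ('h \<Rightarrow> ('p \<times> 'p) list) \<Rightarrow> bool" where
  "connection sP sH cop eps S DR \<omega> \<longleftrightarrow>
     (\<forall>x y. teq2 sP sP (\<omega> (x + y)) (\<omega> x @ \<omega> y))
   \<and> (\<forall>c x. teq2 sP sP (\<omega> (sH c x)) (map (\<lambda>(a, b). (sP c a, b)) (\<omega> x)))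
   \<and> (\<forall>h. sum_list (map (\<lambda>(a, b). a * b) (\<omega> h)) = 0)
   \<and> teq2 sP sP (\<omega> 1) []
   \<and> (\<forall>h. teq2 sP sH (can_map DR (\<omega> h)) [(1, h - sH (eps h) 1)])
   \<and> (\<forall>h. teq3 sP sP sH (coact2 DR (\<omega> h))
          (concat (map (\<lambda>(h1, h2, h3). map (\<lambda>(a, b). (a, b, S h1 * h3)) (\<omega> h2))
             (lift_left cop (cop h)))))"

definition dP :: "'p::ring_1 \<Rightarrow> ('p \<times> 'p) list" where
  "dP p = [(1, p), (- p, 1)]"

definition tneg :: "('a::uminus \<times> 'b) list \<Rightarrow> ('a \<times> 'b) list" where
  "tneg xs = map (\<lambda>(a, b). (- a, b)) xs"

definition Pi_om :: "('p::ring_1 \<Rightarrow> ('p \<times> 'h) list) \<Rightarrow> ('h \<Rightarrow> ('p \<times> 'p) list)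
    \<Rightarrow> ('p \<times> 'p) list \<Rightarrow> ('p \<times> 'p) list" where
  "Pi_om DR \<omega> xs = concat (map (\<lambda>(p, q). concat (map (\<lambda>(x, g).
       map (\<lambda>(a, b). (p * x * a, b)) (\<omega> g)) (DR q))) xs)"

definition DL :: "('h \<Rightarrow> 'h) \<Rightarrow> ('p \<Rightarrow> ('p \<times> 'h) list) \<Rightarrow> 'p \<Rightarrow> ('h \<times> 'p) list" where
  "DL S DR p = map (\<lambda>(x, g). (inv S g, x)) (DR p)"

definition Pibar_om :: "('h \<Rightarrow> 'h) \<Rightarrow> ('p::ring_1 \<Rightarrow> ('p \<times> 'h) list) \<Rightarrow> ('h \<Rightarrow> ('p \<times> 'p) list)
    \<Rightarrow> ('p \<times> 'p) list \<Rightarrow> ('p \<times> 'p) list" where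
  "Pibar_om S DR \<omega> xs = concat (map (\<lambda>(p, q). concat (map (\<lambda>(g, x).
       map (\<lambda>(a, b). (a, b * x * q)) (\<omega> g)) (DL S DR p))) xs)"

text \<open>Membership in (Omega^1 M) P and P (Omega^1 M) inside Omega^1 P \<subseteq> P (x) P.\<close>
definition in_OmM_P :: "('k::field \<Rightarrow> 'p::ring_1 \<Rightarrow> 'p) \<Rightarrow> 'p set \<Rightarrow> ('p \<times> 'p) list \<Rightarrow> bool" where
  "in_OmM_P sP M t \<longleftrightarrow> (\<exists>ys :: (('p \<times> 'p) list \<times> 'p) list.
      (\<forall>(\<xi>, q) \<in> set ys. set \<xi> \<subseteq> M \<times> M \<and> sum_list (map (\<lambda>(m, n). m * n) \<xi>) = 0)
    \<and> teq2 sP sP t (concat (map (\<lambda>(\<xi>, q). map (\<lambda>(m, n). (m, n * q)) \<xi>) ys)))"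

definition in_P_OmM :: "('k::field \<Rightarrow> 'p::ring_1 \<Rightarrow> 'p) \<Rightarrow> 'p set \<Rightarrow> ('p \<times> 'p) list \<Rightarrow> bool" where
  "in_P_OmM sP M t \<longleftrightarrow> (\<exists>ys :: ('p \<times> ('p \<times> 'p) list) list.
      (\<forall>(q, \<xi>) \<in> set ys. set \<xi> \<subseteq> M \<times> M \<and> sum_list (map (\<lambda>(m, n). m * n) \<xi>) = 0)
    \<and> teq2 sP sP t (concat (map (\<lambda>(q, \<xi>). map (\<lambda>(m, n). (q * m, n)) \<xi>) ys)))"

definition left_strong :: "('k::field \<Rightarrow> 'p::ring_1 \<Rightarrow> 'p) \<Rightarrow> ('k \<Rightarrow> 'h::ring_1 \<Rightarrow> 'h)
    \<Rightarrow> ('p \<Rightarrow> ('p \<times> 'h) list) \<Rightarrow> ('h \<Rightarrow> ('p \<times> 'p) list) \<Rightarrow> bool" where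
  "left_strong sP sH DR \<omega> \<longleftrightarrow>
     (\<forall>p. in_OmM_P sP (coinv sP sH DR) (dP p @ tneg (Pi_om DR \<omega> (dP p))))"

end

(*
  Over a field two formal sums represent the same tensor iff every multilinear form takes the
  same value on them, so every tensor identity below is tested against arbitrary test forms
  and Sweedler calculus becomes a rearrangement of iterated finite sums.  By the same duality,
  a tensor whose left legs are fixed by the coaction can be rewritten with left legs in M, and
  then lies in (Omega^1 M) P as soon as its product vanishes; symmetrically on the right.

  (i) => (iii): on (Omega^1 M) P the coaction on both factors agrees with the coaction on the
  right factor alone.  Evaluated on D p = (id - Pi_omega) dp, and using the covariance of omega,
  this says that the defect of (iii) vanishes after twisting by p(0) (x) p(1); as the Galois map
  is onto, 1 (x) h is a combination of such twists.
  (iii) => (ii): Delta_L is Delta_R followed by the flip and the inverse antipode.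
  (ii) => (i), and (iii) => the claim on Dbar: (ii), resp. (iii), is what makes the left legs
  of D p, resp. the right legs of Dbar p, coinvariant.
*)

theory Submission
  imports Defs
begin

section \<open>Tensor equalities are detected by multilinear forms\<close>

definition linear_form :: "('k::field \<Rightarrow> 'a::plus \<Rightarrow> 'a) \<Rightarrow> ('a \<Rightarrow> 'k) \<Rightarrow> bool" where
  "linear_form s f \<longleftrightarrow> (\<forall>x y. f (x + y) = f x + f y) \<and> (\<forall>c x. f (s c x) = c * f x)"

definition bilinear_form ::
  "('k::field \<Rightarrow> 'a::plus \<Rightarrow> 'a) \<Rightarrow> ('k \<Rightarrow> 'b::plus \<Rightarrow> 'b) \<Rightarrow> ('a \<Rightarrow> 'b \<Rightarrow> 'k) \<Rightarrow> bool" where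
  "bilinear_form s1 s2 f \<longleftrightarrow> (\<forall>b. linear_form s1 (\<lambda>a. f a b)) \<and> (\<forall>a. linear_form s2 (f a))"

definition trilinear_form :: "('k::field \<Rightarrow> 'a::plus \<Rightarrow> 'a) \<Rightarrow> ('k \<Rightarrow> 'b::plus \<Rightarrow> 'b)
    \<Rightarrow> ('k \<Rightarrow> 'c::plus \<Rightarrow> 'c) \<Rightarrow> ('a \<Rightarrow> 'b \<Rightarrow> 'c \<Rightarrow> 'k) \<Rightarrow> bool" where
  "trilinear_form s1 s2 s3 f \<longleftrightarrow> (\<forall>b c. linear_form s1 (\<lambda>a. f a b c))
     \<and> (\<forall>a c. linear_form s2 (\<lambda>b. f a b c)) \<and> (\<forall>a b. linear_form s3 (f a b))"

definition sum2 :: "('a \<times> 'b) list \<Rightarrow> ('a \<Rightarrow> 'b \<Rightarrow> 'k::comm_monoid_add) \<Rightarrow> 'k" where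
  "sum2 xs f = sum_list (map (\<lambda>(a, b). f a b) xs)"

definition sum3 :: "('a \<times> 'b \<times> 'c) list \<Rightarrow> ('a \<Rightarrow> 'b \<Rightarrow> 'c \<Rightarrow> 'k::comm_monoid_add) \<Rightarrow> 'k" where
  "sum3 xs f = sum_list (map (\<lambda>(a, b, c). f a b c) xs)"

lemma linear_form_add: "linear_form s f \<Longrightarrow> f (x + y) = f x + f y"
  by (simp add: linear_form_def)

lemma linear_form_scale: "linear_form s f \<Longrightarrow> f (s c x) = c * f x"
  by (simp add: linear_form_def)

lemma linear_form_0: "linear_form s (f :: 'a::monoid_add \<Rightarrow> 'k::field) \<Longrightarrow> f 0 = 0"
  using linear_form_add[of s f 0 0] by (metis add_0 add_cancel_right_right)

lemma linear_form_uminus: "linear_form s (f :: 'a::group_add \<Rightarrow> 'k::field) \<Longrightarrow> f (- x) = - f x"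
  using linear_form_add[of s f x "- x"] linear_form_0[of s f] by (simp add: add_eq_0_iff)

lemma linear_form_diff: "linear_form s (f :: 'a::group_add \<Rightarrow> 'k::field) \<Longrightarrow> f (x - y) = f x - f y"
  using linear_form_add[of s f "x - y" y] by simp

lemma linear_form_sum: "linear_form s (f :: 'a::comm_monoid_add \<Rightarrow> 'k::field) \<Longrightarrow> f (sum g A) = (\<Sum>x\<in>A. f (g x))"
  by (induction A rule: infinite_finite_induct) (auto simp: linear_form_add linear_form_0)

lemma linear_form_sum2:
  "linear_form s (f :: 'a::monoid_add \<Rightarrow> 'k::field) \<Longrightarrow> f (sum_list (map (\<lambda>(a, b). g a b) xs)) = sum2 xs (\<lambda>a b. f (g a b))"
  by (induction xs) (auto simp: sum2_def linear_form_add linear_form_0)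

lemma bilinear_formD1: "bilinear_form s1 s2 f \<Longrightarrow> linear_form s1 (\<lambda>a. f a b)"
  by (simp add: bilinear_form_def)

lemma bilinear_formD2: "bilinear_form s1 s2 f \<Longrightarrow> linear_form s2 (f a)"
  by (simp add: bilinear_form_def)

lemma bilinear_form_fun_eqs:
  fixes F :: "'a::ab_group_add \<Rightarrow> 'b::plus \<Rightarrow> 'k::field"
  assumes "bilinear_form s1 s2 F"
  shows "F (x + y) = (\<lambda>b. F x b + F y b)" "F (s1 c x) = (\<lambda>b. c * F x b)"
    "F (- x) = (\<lambda>b. - F x b)" "F (x - y) = (\<lambda>b. F x b - F y b)"
  using assms linear_form_uminus[OF bilinear_formD1[OF assms]] linear_form_diff[OF bilinear_formD1[OF assms]]
  by (auto simp: bilinear_form_def linear_form_def)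

lemma trilinear_form_fun_eqs:
  fixes \<gamma> :: "'a::ab_group_add \<Rightarrow> 'b::ab_group_add \<Rightarrow> 'c::plus \<Rightarrow> 'k::field"
  assumes "trilinear_form s1 s2 s3 \<gamma>"
  shows "\<gamma> (x + y) = (\<lambda>b c. \<gamma> x b c + \<gamma> y b c)" "\<gamma> (s1 k x) = (\<lambda>b c. k * \<gamma> x b c)"
    "\<gamma> (- x) = (\<lambda>b c. - \<gamma> x b c)" "\<gamma> (x - y) = (\<lambda>b c. \<gamma> x b c - \<gamma> y b c)"
    "\<gamma> a (u + v) = (\<lambda>c. \<gamma> a u c + \<gamma> a v c)" "\<gamma> a (s2 k u) = (\<lambda>c. k * \<gamma> a u c)"
    "\<gamma> a (- u) = (\<lambda>c. - \<gamma> a u c)" "\<gamma> a (u - v) = (\<lambda>c. \<gamma> a u c - \<gamma> a v c)"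
proof -
  have l1: "linear_form s1 (\<lambda>a. \<gamma> a b c)" and l2: "linear_form s2 (\<lambda>b. \<gamma> a b c)" for a b c
    using assms by (simp_all add: trilinear_form_def)
  show "\<gamma> (x + y) = (\<lambda>b c. \<gamma> x b c + \<gamma> y b c)" "\<gamma> (s1 k x) = (\<lambda>b c. k * \<gamma> x b c)"
    "\<gamma> (- x) = (\<lambda>b c. - \<gamma> x b c)" "\<gamma> (x - y) = (\<lambda>b c. \<gamma> x b c - \<gamma> y b c)"
    "\<gamma> a (u + v) = (\<lambda>c. \<gamma> a u c + \<gamma> a v c)" "\<gamma> a (s2 k u) = (\<lambda>c. k * \<gamma> a u c)"
    "\<gamma> a (- u) = (\<lambda>c. - \<gamma> a u c)" "\<gamma> a (u - v) = (\<lambda>c. \<gamma> a u c - \<gamma> a v c)"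
    using linear_form_add[OF l1] linear_form_scale[OF l1] linear_form_uminus[OF l1] linear_form_diff[OF l1]
      linear_form_add[OF l2] linear_form_scale[OF l2] linear_form_uminus[OF l2] linear_form_diff[OF l2]
    by (auto simp: fun_eq_iff)
qed

abbreviation pm_scale :: "'k::field \<Rightarrow> ('z \<Rightarrow>\<^sub>0 'k) \<Rightarrow> ('z \<Rightarrow>\<^sub>0 'k)" where
  "pm_scale c x \<equiv> Poly_Mapping.map ((*) c) x"

lemma lookup_pm_scale: "Poly_Mapping.lookup (pm_scale c x) z = c * Poly_Mapping.lookup x z"
  by (simp add: Poly_Mapping.map.rep_eq when_def)

lemma vector_space_pm_scale: "vector_space (pm_scale :: 'k::field \<Rightarrow> ('z \<Rightarrow>\<^sub>0 'k) \<Rightarrow> _)"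
  unfolding vector_space_def
  by (auto intro!: poly_mapping_eqI simp: lookup_pm_scale lookup_add algebra_simps)

definition pm_eval :: "('z \<Rightarrow> 'k::field) \<Rightarrow> ('z \<Rightarrow>\<^sub>0 'k) \<Rightarrow> 'k" where
  "pm_eval f x = (\<Sum>z\<in>Poly_Mapping.keys x. Poly_Mapping.lookup x z * f z)"

lemma pm_eval_superset:
  "finite A \<Longrightarrow> Poly_Mapping.keys x \<subseteq> A \<Longrightarrow> pm_eval f x = (\<Sum>z\<in>A. Poly_Mapping.lookup x z * f z)"
  unfolding pm_eval_def by (rule sum.mono_neutral_left) (auto simp: in_keys_iff)

lemma linear_form_pm_eval: "linear_form pm_scale (pm_eval f)"
proof -
  have "pm_eval f (x + y) = pm_eval f x + pm_eval f y" for x y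
  proof -
    let ?A = "Poly_Mapping.keys x \<union> Poly_Mapping.keys y \<union> Poly_Mapping.keys (x + y)"
    have "pm_eval f (x + y) = (\<Sum>z\<in>?A. Poly_Mapping.lookup (x + y) z * f z)"
      by (rule pm_eval_superset) auto
    also have "\<dots> = (\<Sum>z\<in>?A. Poly_Mapping.lookup x z * f z) + (\<Sum>z\<in>?A. Poly_Mapping.lookup y z * f z)"
      by (simp add: lookup_add distrib_right sum.distrib)
    also have "\<dots> = pm_eval f x + pm_eval f y"
      by (subst (1 2) pm_eval_superset[of ?A]) auto
    finally show ?thesis .
  qed
  moreover have "pm_eval f (pm_scale c x) = c * pm_eval f x" for c x
    by (subst (1 2) pm_eval_superset[of "Poly_Mapping.keys x"])
      (auto simp: lookup_pm_scale sum_distrib_left in_keys_iff mult.assoc)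
  ultimately show ?thesis by (simp add: linear_form_def)
qed

lemma pm_eval_0 [simp]: "pm_eval f 0 = 0"
  by (simp add: pm_eval_def)

lemma pm_eval_add: "pm_eval f (x + y) = pm_eval f x + pm_eval f y"
  by (rule linear_form_add[OF linear_form_pm_eval])

lemma pm_eval_diff: "pm_eval f (x - y) = pm_eval f x - pm_eval f y"
  by (rule linear_form_diff[OF linear_form_pm_eval])

lemma pm_eval_single: "pm_eval f (Poly_Mapping.single z c) = c * f z"
  by (subst pm_eval_superset[of "{z}"]) (auto simp: lookup_single)

lemma pm_eval_pm_of: "pm_eval f (pm_of xs) = sum_list (map f xs)"
  by (induction xs)
    (auto simp: pm_of_def pm_eval_single pm_eval_add)

lemma linear_form_pm_of:
  "linear_form pm_scale \<phi> \<Longrightarrow> \<phi> (pm_of zs) = sum_list (map (\<lambda>z. \<phi> (Poly_Mapping.single z 1)) zs)"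
  by (induction zs) (auto simp: pm_of_def linear_form_add linear_form_0)

lemma linear_form_separates_subspace:
  fixes s :: "'k::field \<Rightarrow> 'v::ab_group_add \<Rightarrow> 'v"
  assumes vs: "vector_space s" and W: "module.subspace s W" and d: "d \<notin> W"
  shows "\<exists>\<phi>. linear_form s \<phi> \<and> (\<forall>w\<in>W. \<phi> w = 0) \<and> \<phi> d = 1"
proof -
  interpret V: vector_space s by (rule vs)
  interpret VK: vector_space_pair s "(*) :: 'k \<Rightarrow> 'k \<Rightarrow> 'k"
    by (simp add: vector_space_pair_def vs) (simp add: vector_space_def algebra_simps)
  obtain B where B: "B \<subseteq> W" "V.independent B" "W \<subseteq> V.span B"
    using V.maximal_independent_subset by blast
  have "d \<notin> V.span B"
    using B(1) W d V.span_minimal by blast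
  then have "V.independent (insert d B)"
    using B(2) V.independent_insertI by blast
  then obtain g where g: "Vector_Spaces.linear s (*) g" "\<forall>x\<in>insert d B. g x = (if x = d then 1 else 0)"
    using VK.linear_independent_extend[where f="\<lambda>x. if x = d then 1 else 0"] by blast
  have "g w = 0" if "w \<in> W" for w
  proof -
    have "\<And>x. x \<in> B \<Longrightarrow> g x = 0" using g(2) B(1) d by auto
    then show ?thesis using VK.linear_eq_0_on_span[OF g(1)] B(3) that by blast
  qed
  moreover have "linear_form s g"
    using g(1) by (simp add: linear_form_def Vector_Spaces.linear_iff)
  ultimately show ?thesis using g(2) by auto
qed

lemma eq_iff_linear_forms:
  fixes s :: "'k::field \<Rightarrow> 'v::ab_group_add \<Rightarrow> 'v"
  assumes "vector_space s"
  shows "x = y \<longleftrightarrow> (\<forall>\<phi>. linear_form s \<phi> \<longrightarrow> \<phi> x = \<phi> y)"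
proof (intro iffI allI impI; (rule ccontr)?)
  assume H: "\<forall>\<phi>. linear_form s \<phi> \<longrightarrow> \<phi> x = \<phi> y" and "x \<noteq> y"
  moreover have "module.subspace s {0}"
    using assms by (simp add: module.subspace_single_0 module_iff_vector_space)
  ultimately obtain \<phi> where "linear_form s \<phi>" "\<phi> (x - y) = 1"
    using linear_form_separates_subspace[OF assms, of "{0}" "x - y"] by auto
  moreover have "\<phi> x = \<phi> y" using H \<open>linear_form s \<phi>\<close> by blast
  ultimately show False by (simp add: linear_form_diff)
qed simp

lemma pm_of_diff_mem_subspace_iff:
  assumes W: "module.subspace pm_scale W"
  shows "pm_of xs - pm_of ys \<in> W \<longleftrightarrow>
    (\<forall>f. (\<forall>w\<in>W. pm_eval f w = 0) \<longrightarrow> sum_list (map f xs) = sum_list (map f ys))"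
proof (intro iffI allI impI)
  fix f assume "pm_of xs - pm_of ys \<in> W" "\<forall>w\<in>W. pm_eval f w = 0"
  then show "sum_list (map f xs) = sum_list (map f ys)"
    by (auto simp: linear_form_diff[OF linear_form_pm_eval] pm_eval_pm_of)
next
  assume H: "\<forall>f. (\<forall>w\<in>W. pm_eval f w = 0) \<longrightarrow> sum_list (map f xs) = sum_list (map f ys)"
  show "pm_of xs - pm_of ys \<in> W"
  proof (rule ccontr)
    assume "pm_of xs - pm_of ys \<notin> W"
    then obtain \<phi> where \<phi>: "linear_form pm_scale \<phi>" "\<forall>w\<in>W. \<phi> w = 0" "\<phi> (pm_of xs - pm_of ys) = 1"
      using linear_form_separates_subspace[OF vector_space_pm_scale W] by blast
    define f where "f z = \<phi> (Poly_Mapping.single z 1)" for z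
    have "\<phi> w = pm_eval f w" for w
    proof -
      have single_scale: "Poly_Mapping.single z c = pm_scale c (Poly_Mapping.single z 1)" for z c
        by (rule poly_mapping_eqI) (simp add: lookup_pm_scale lookup_single when_def)
      have "w = (\<Sum>z\<in>Poly_Mapping.keys w. Poly_Mapping.single z (Poly_Mapping.lookup w z))"
        by (rule poly_mapping_eqI) (auto simp: lookup_sum lookup_single when_def in_keys_iff)
      then have "\<phi> w = (\<Sum>z\<in>Poly_Mapping.keys w. \<phi> (Poly_Mapping.single z (Poly_Mapping.lookup w z)))"
        by (metis linear_form_sum[OF \<phi>(1)])
      then show ?thesis
        by (simp only: single_scale[of _ "Poly_Mapping.lookup w _"] linear_form_scale[OF \<phi>(1)])
          (simp add: pm_eval_def f_def)
    qed
    then have "sum_list (map f xs) = sum_list (map f ys)"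
      using H \<phi>(2) by simp
    then show False
      using \<phi>(3) by (simp add: linear_form_diff[OF \<phi>(1)] linear_form_pm_of[OF \<phi>(1)] f_def[symmetric])
  qed
qed

lemma subspace_span_gen: "module.subspace pm_scale (span_gen sA sB A B G)"
  using vector_space_pm_scale
  unfolding module.subspace_def[OF vector_space_pm_scale[unfolded module_iff_vector_space[symmetric]]]
  by (auto intro: span_gen.intros)

lemma subspace_tens3_rel: "module.subspace pm_scale (tens3_rel sA sB sC)"
  using vector_space_pm_scale
  unfolding module.subspace_def[OF vector_space_pm_scale[unfolded module_iff_vector_space[symmetric]]]
  by (auto intro: tens3_rel.intros)

lemma pm_eval_vanishes_on_span_gen_iff:
  "(\<forall>w\<in>span_gen sA sB UNIV UNIV {}. pm_eval (\<lambda>(a, b). f a b) w = 0) \<longleftrightarrow> bilinear_form sA sB f"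
proof
  assume H: "\<forall>w\<in>span_gen sA sB UNIV UNIV {}. pm_eval (\<lambda>(a, b). f a b) w = 0"
  have "pm_eval (\<lambda>(a, b). f a b) w = 0" if "w \<in> span_gen sA sB UNIV UNIV {}" for w
    using H that by blast
  note gen = this[OF span_gen.addL] this[OF span_gen.addR] this[OF span_gen.smulL] this[OF span_gen.smulR]
  show "bilinear_form sA sB f"
    using gen by (simp add: bilinear_form_def linear_form_def pm_eval_add pm_eval_diff pm_eval_single algebra_simps)
next
  assume f: "bilinear_form sA sB f"
  show "\<forall>w\<in>span_gen sA sB UNIV UNIV {}. pm_eval (\<lambda>(a, b). f a b) w = 0"
  proof
    fix w assume "w \<in> span_gen sA sB UNIV UNIV {}"
    then show "pm_eval (\<lambda>(a, b). f a b) w = 0"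
      by (induction rule: span_gen.induct)
        (use f in \<open>auto simp: pm_eval_add pm_eval_diff pm_eval_single bilinear_form_def linear_form_def
          linear_form_scale[OF linear_form_pm_eval]\<close>)
  qed
qed

lemma pm_eval_vanishes_on_tens3_rel_iff:
  "(\<forall>w\<in>tens3_rel sA sB sC. pm_eval (\<lambda>(a, b, c). f a b c) w = 0) \<longleftrightarrow> trilinear_form sA sB sC f"
proof
  assume H: "\<forall>w\<in>tens3_rel sA sB sC. pm_eval (\<lambda>(a, b, c). f a b c) w = 0"
  have "pm_eval (\<lambda>(a, b, c). f a b c) w = 0" if "w \<in> tens3_rel sA sB sC" for w
    using H that by blast
  note gen = this[OF tens3_rel.add1] this[OF tens3_rel.add2] this[OF tens3_rel.add3]
    this[OF tens3_rel.smul1] this[OF tens3_rel.smul2] this[OF tens3_rel.smul3]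
  show "trilinear_form sA sB sC f"
    using gen by (simp add: trilinear_form_def linear_form_def pm_eval_add pm_eval_diff pm_eval_single algebra_simps)
next
  assume f: "trilinear_form sA sB sC f"
  show "\<forall>w\<in>tens3_rel sA sB sC. pm_eval (\<lambda>(a, b, c). f a b c) w = 0"
  proof
    fix w assume "w \<in> tens3_rel sA sB sC"
    then show "pm_eval (\<lambda>(a, b, c). f a b c) w = 0"
      by (induction rule: tens3_rel.induct)
        (use f in \<open>auto simp: pm_eval_add pm_eval_diff pm_eval_single trilinear_form_def linear_form_def
          linear_form_scale[OF linear_form_pm_eval]\<close>)
  qed
qed

lemma all_case_prod2: "(\<forall>f. P f) \<longleftrightarrow> (\<forall>g. P (\<lambda>(a, b). g a b))"
  by (metis case_prod_curry)

lemma all_case_prod3: "(\<forall>f. P f) \<longleftrightarrow> (\<forall>g. P (\<lambda>(a, b, c). g a b c))"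
proof (intro iffI allI)
  fix f assume "\<forall>g. P (\<lambda>(a, b, c). g a b c)"
  from spec[OF this, of "\<lambda>a b c. f (a, b, c)"] show "P f" by simp
qed blast

lemma teq2_iff_bilinear_forms:
  "teq2 sA sB xs ys \<longleftrightarrow> (\<forall>f. bilinear_form sA sB f \<longrightarrow> sum2 xs f = sum2 ys f)"
proof -
  have "teq2 sA sB xs ys \<longleftrightarrow> (\<forall>f. (\<forall>w\<in>span_gen sA sB UNIV UNIV {}. pm_eval f w = 0)
      \<longrightarrow> sum_list (map f xs) = sum_list (map f ys))"
    unfolding teq2_def by (rule pm_of_diff_mem_subspace_iff[OF subspace_span_gen])
  also have "\<dots> \<longleftrightarrow> (\<forall>f. (\<forall>w\<in>span_gen sA sB UNIV UNIV {}. pm_eval (\<lambda>(a, b). f a b) w = 0)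
      \<longrightarrow> sum_list (map (\<lambda>(a, b). f a b) xs) = sum_list (map (\<lambda>(a, b). f a b) ys))"
    using all_case_prod2[where P = "\<lambda>f. (\<forall>w\<in>span_gen sA sB UNIV UNIV {}. pm_eval f w = 0)
      \<longrightarrow> sum_list (map f xs) = sum_list (map f ys)"] by simp
  finally show ?thesis
    by (simp add: pm_eval_vanishes_on_span_gen_iff sum2_def)
qed

lemma teq3_iff_trilinear_forms:
  "teq3 sA sB sC xs ys \<longleftrightarrow> (\<forall>f. trilinear_form sA sB sC f \<longrightarrow> sum3 xs f = sum3 ys f)"
proof -
  have "teq3 sA sB sC xs ys \<longleftrightarrow> (\<forall>f. (\<forall>w\<in>tens3_rel sA sB sC. pm_eval f w = 0)
      \<longrightarrow> sum_list (map f xs) = sum_list (map f ys))"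
    unfolding teq3_def by (rule pm_of_diff_mem_subspace_iff[OF subspace_tens3_rel])
  also have "\<dots> \<longleftrightarrow> (\<forall>f. (\<forall>w\<in>tens3_rel sA sB sC. pm_eval (\<lambda>(a, b, c). f a b c) w = 0)
      \<longrightarrow> sum_list (map (\<lambda>(a, b, c). f a b c) xs) = sum_list (map (\<lambda>(a, b, c). f a b c) ys))"
    using all_case_prod3[where P = "\<lambda>f. (\<forall>w\<in>tens3_rel sA sB sC. pm_eval f w = 0)
      \<longrightarrow> sum_list (map f xs) = sum_list (map f ys)"] by simp
  finally show ?thesis
    by (simp add: pm_eval_vanishes_on_tens3_rel_iff sum3_def)
qed

lemma sum2_Nil [simp]: "sum2 [] F = 0"
  by (simp add: sum2_def)

lemma sum2_Cons [simp]: "sum2 ((a, b) # xs) F = F a b + sum2 xs F"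
  by (simp add: sum2_def)

lemma sum2_append [simp]: "sum2 (xs @ ys) F = sum2 xs F + sum2 ys F"
  by (simp add: sum2_def)

lemma sum3_Nil [simp]: "sum3 [] F = 0"
  by (simp add: sum3_def)

lemma sum3_Cons [simp]: "sum3 ((a, b, c) # xs) F = F a b c + sum3 xs F"
  by (simp add: sum3_def)

lemma sum3_append [simp]: "sum3 (xs @ ys) F = sum3 xs F + sum3 ys F"
  by (simp add: sum3_def)

lemma sum2_concat_map2 [simp]:
  "sum2 (concat (map (\<lambda>(a, b). g a b) xs)) F = sum2 xs (\<lambda>a b. sum2 (g a b) F)"
  by (induction xs) auto

lemma sum3_concat_map2 [simp]:
  "sum3 (concat (map (\<lambda>(a, b). g a b) xs)) F = sum2 xs (\<lambda>a b. sum3 (g a b) F)"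
  by (induction xs) auto

lemma sum3_concat_map3 [simp]:
  "sum3 (concat (map (\<lambda>(a, b, c). g a b c) xs)) F = sum3 xs (\<lambda>a b c. sum3 (g a b c) F)"
  by (induction xs) auto

lemma sum2_map2 [simp]: "sum2 (map (\<lambda>(a, b). (f a b, g a b)) xs) F = sum2 xs (\<lambda>a b. F (f a b) (g a b))"
  by (induction xs) auto

lemma sum3_map2 [simp]:
  "sum3 (map (\<lambda>(a, b). (f a b, g a b, h a b)) xs) F = sum2 xs (\<lambda>a b. F (f a b) (g a b) (h a b))"
  by (induction xs) auto

lemma sum3_map_Pair [simp]: "sum3 (map (Pair a) ys) G = sum2 ys (G a)"
  by (induction ys) auto

lemma sum3_lift_left [simp]: "sum3 (lift_left f xs) G = sum2 xs (\<lambda>a b. sum2 (f a) (\<lambda>x y. G x y b))"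
  by (simp add: lift_left_def)

lemma sum3_lift_right [simp]: "sum3 (lift_right f xs) G = sum2 xs (\<lambda>a b. sum2 (f b) (\<lambda>x y. G a x y))"
  by (simp add: lift_right_def)

lemma sum2_add_fun [simp]: "sum2 xs (\<lambda>a b. F a b + G a b) = sum2 xs F + sum2 xs G"
  by (induction xs) (auto simp: algebra_simps)

lemma sum2_mult_fun [simp]: "sum2 xs (\<lambda>a b. (c::'k::comm_ring) * F a b) = c * sum2 xs F"
  by (induction xs) (auto simp: algebra_simps)

lemma sum2_mult_fun2 [simp]: "sum2 xs (\<lambda>a b. F a b * (c::'k::comm_ring)) = sum2 xs F * c"
  by (induction xs) (auto simp: algebra_simps)

lemma sum2_zero_fun [simp]: "sum2 xs (\<lambda>a b. 0) = 0"
  by (induction xs) auto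

lemma sum2_neg_fun [simp]: "sum2 xs (\<lambda>a b. - (F a b :: 'k::ab_group_add)) = - sum2 xs F"
  by (induction xs) (auto simp: algebra_simps)

lemma sum2_diff_fun [simp]: "sum2 xs (\<lambda>a b. (F a b :: 'k::ab_group_add) - G a b) = sum2 xs F - sum2 xs G"
  by (induction xs) (auto simp: algebra_simps)

abbreviation mult_map :: "('a::{times, monoid_add} \<times> 'a) list \<Rightarrow> 'a" where
  "mult_map xs \<equiv> sum_list (map (\<lambda>(a, b). a * b) xs)"

lemma sum2_tneg [simp]: "sum2 (tneg xs) F = sum2 xs (\<lambda>a b. F (- a) b)"
  by (simp add: tneg_def)

lemma sum2_DL [simp]: "sum2 (DL S DR p) G = sum2 (DR p) (\<lambda>x g. G (inv S g) x)"
  by (simp add: DL_def)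

lemma teq2_flip: "teq2 sA sB xs ys \<Longrightarrow> teq2 sB sA (map (\<lambda>(a, b). (b, a)) xs) (map (\<lambda>(a, b). (b, a)) ys)"
  by (auto simp: teq2_iff_bilinear_forms bilinear_form_def)

lemma sum2_swap: "sum2 xs (\<lambda>a b. sum2 ys (\<lambda>c d. F a b c d)) = sum2 ys (\<lambda>c d. sum2 xs (\<lambda>a b. F a b c d))"
  by (induction xs) auto

lemma sum2_sum_list_swap:
  "sum2 xs (\<lambda>a b. sum_list (map (F a b) el)) = sum_list (map (\<lambda>e. sum2 xs (\<lambda>a b. F a b e)) el)"
  by (induction xs) (auto simp: sum_list_addf)

lemma sum2_cong: "(\<And>a b. (a, b) \<in> set xs \<Longrightarrow> F a b = G a b) \<Longrightarrow> sum2 xs F = sum2 xs G"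
  by (induction xs) auto

lemma (in vector_space) linear_form_coordinates:
  assumes "finite E" "independent E"
  obtains \<phi> where "\<And>e. e \<in> E \<Longrightarrow> linear_form scale (\<phi> e)"
    and "\<And>b. b \<in> span E \<Longrightarrow> b = (\<Sum>e\<in>E. scale (\<phi> e b) e)"
proof -
  interpret VK: vector_space_pair scale "(*) :: 'a \<Rightarrow> 'a \<Rightarrow> 'a"
    by unfold_locales (simp_all add: algebra_simps)
  have "\<forall>e\<in>E. \<exists>g. Vector_Spaces.linear scale (*) g \<and> (\<forall>x\<in>E. g x = (if x = e then 1 else 0))"
    by (intro ballI VK.linear_independent_extend[OF assms(2)])
  then obtain \<phi> where \<phi>: "\<And>e. e \<in> E \<Longrightarrow> Vector_Spaces.linear scale (*) (\<phi> e)"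
      "\<And>e x. e \<in> E \<Longrightarrow> x \<in> E \<Longrightarrow> \<phi> e x = (if x = e then 1 else 0)"
    by metis
  have lin: "linear_form scale (\<phi> e)" if "e \<in> E" for e
    using \<phi>(1)[OF that] by (simp add: linear_form_def Vector_Spaces.linear_iff)
  have "b = (\<Sum>e\<in>E. scale (\<phi> e b) e)" if "b \<in> span E" for b
  proof -
    obtain u where u: "b = (\<Sum>v\<in>E. scale (u v) v)"
      using \<open>b \<in> span E\<close> span_finite[OF assms(1)] by auto
    have "\<phi> e b = u e" if "e \<in> E" for e
    proof -
      have "\<phi> e b = (\<Sum>v\<in>E. u v * \<phi> e v)"
        unfolding u by (simp add: linear_form_sum[OF lin[OF that]] linear_form_scale[OF lin[OF that]])
      also have "\<dots> = (\<Sum>v\<in>E. if v = e then u v else 0)"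
        using \<phi>(2)[OF that] by (intro sum.cong) auto
      also have "\<dots> = u e"
        using that assms(1) by simp
      finally show ?thesis .
    qed
    then show ?thesis using u by simp
  qed
  with lin show thesis using that by blast
qed

(* Over a field, ker (L (x) id) = ker L (x) B. *)
lemma teq2_left_legs_in_kernels:
  fixes sA :: "'k::field \<Rightarrow> 'a::ab_group_add \<Rightarrow> 'a" and sB :: "'k \<Rightarrow> 'b::ab_group_add \<Rightarrow> 'b"
  assumes vsB: "vector_space sB"
    and L: "\<And>i. i \<in> I \<Longrightarrow> linear_form sA (L i)"
    and H: "\<And>i \<phi>. i \<in> I \<Longrightarrow> linear_form sB \<phi> \<Longrightarrow> sum2 t (\<lambda>a b. L i a * \<phi> b) = 0"
  shows "\<exists>zs. set zs \<subseteq> {a. \<forall>i\<in>I. L i a = 0} \<times> UNIV \<and> teq2 sA sB t zs"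
proof -
  interpret B: vector_space sB by (rule vsB)
  obtain E where E: "E \<subseteq> set (map snd t)" "B.independent E" "set (map snd t) \<subseteq> B.span E"
    using B.maximal_independent_subset by blast
  have "finite E" using E(1) finite_subset by blast
  then obtain \<phi> where \<phi>: "\<And>e. e \<in> E \<Longrightarrow> linear_form sB (\<phi> e)"
      "\<And>b. b \<in> B.span E \<Longrightarrow> b = (\<Sum>e\<in>E. sB (\<phi> e b) e)"
    using B.linear_form_coordinates E(2) by blast
  obtain el where el: "set el = E" "distinct el"
    using finite_distinct_list[OF \<open>finite E\<close>] by blast
  define zs where "zs = map (\<lambda>e. (sum_list (map (\<lambda>(a, b). sA (\<phi> e b) a) t), e)) el"
  have "set zs \<subseteq> {a. \<forall>i\<in>I. L i a = 0} \<times> UNIV"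
  proof (clarsimp simp: zs_def)
    fix e i assume "e \<in> set el" "i \<in> I"
    then show "L i (sum_list (map (\<lambda>(a, b). sA (\<phi> e b) a) t)) = 0"
      using H[OF \<open>i \<in> I\<close> \<phi>(1)] el
      by (simp add: linear_form_sum2[OF L] linear_form_scale[OF L] mult.commute)
  qed
  moreover have "sum2 t f = sum2 zs f" if f: "bilinear_form sA sB f" for f
  proof -
    note f1 = bilinear_formD1[OF f] and f2 = bilinear_formD2[OF f]
    have "sum2 zs f = sum_list (map (\<lambda>e. sum2 t (\<lambda>a b. \<phi> e b * f a e)) el)"
      unfolding zs_def sum2_def[of "map _ el"]
      by (simp add: o_def linear_form_sum2[OF f1] linear_form_scale[OF f1])
    also have "\<dots> = sum2 t (\<lambda>a b. f a (\<Sum>e\<in>E. sB (\<phi> e b) e))"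
      by (simp add: sum2_sum_list_swap[symmetric] linear_form_sum[OF f2] linear_form_scale[OF f2]
          sum_list_distinct_conv_sum_set el)
    also have "\<dots> = sum2 t f"
      using E(3) \<phi>(2) by (intro sum2_cong) force
    finally show ?thesis by simp
  qed
  ultimately show ?thesis
    by (auto simp: teq2_iff_bilinear_forms)
qed

locale hopf =
  fixes sH :: "'k::field \<Rightarrow> 'h::ring_1 \<Rightarrow> 'h"
    and cop :: "'h \<Rightarrow> ('h \<times> 'h) list"
    and eps :: "'h \<Rightarrow> 'k"
    and S :: "'h \<Rightarrow> 'h"
  assumes hopf_algebra: "hopf_algebra sH cop eps S"
begin

(* Sweedler sums against a test form F: C h F = F h(1) h(2); in the bundle also
   R p F = F p(0) p(1) and W h F = F \<omega>(h). *)
abbreviation "C h F \<equiv> sum2 (cop h) F"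

lemma k_algebra_H: "k_algebra sH"
  using hopf_algebra by (simp add: hopf_algebra_def)

lemma vector_space_H: "vector_space sH"
  using k_algebra_H by (simp add: k_algebra_def)

lemma sH_mult_left [simp]: "sH c x * y = sH c (x * y)"
  using k_algebra_H by (simp add: k_algebra_def)

lemma sH_mult_right [simp]: "x * sH c y = sH c (x * y)"
  using k_algebra_H by (simp add: k_algebra_def)

lemma eps_add [simp]: "eps (x + y) = eps x + eps y"
  and eps_smul [simp]: "eps (sH c x) = c * eps x"
  and eps_mult [simp]: "eps (x * y) = eps x * eps y"
  and eps_one [simp]: "eps 1 = 1"
  and S_add [simp]: "S (x + y) = S x + S y"
  and S_smul [simp]: "S (sH c x) = sH c (S x)"
  using hopf_algebra by (simp_all add: hopf_algebra_def)

lemma S_0 [simp]: "S 0 = 0"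
  using S_add[of 0 0] by simp

lemma linear_form_eps: "linear_form sH eps"
  by (simp add: linear_form_def)

lemma eq_by_linear_forms_H: "(\<And>\<psi>. linear_form sH \<psi> \<Longrightarrow> \<psi> x = \<psi> y) \<Longrightarrow> x = y"
  using eq_iff_linear_forms[OF vector_space_H] by blast

lemma C_add: "bilinear_form sH sH F \<Longrightarrow> C (x + y) F = C x F + C y F"
  and C_smul: "bilinear_form sH sH F \<Longrightarrow> C (sH c x) F = c * C x F"
  and C_mult: "bilinear_form sH sH F \<Longrightarrow> C (x * y) F = C x (\<lambda>a b. C y (\<lambda>a' b'. F (a * a') (b * b')))"
  and C_one: "bilinear_form sH sH F \<Longrightarrow> C 1 F = F 1 1"
  using hopf_algebra
  by (auto simp: hopf_algebra_def teq2_iff_bilinear_forms tmult_def bilinear_form_def linear_form_def)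

lemma C_coassoc:
  "trilinear_form sH sH sH F \<Longrightarrow> C h (\<lambda>u c. C u (\<lambda>a b. F a b c)) = C h (\<lambda>a v. C v (\<lambda>b c. F a b c))"
  using hopf_algebra by (simp add: hopf_algebra_def teq3_iff_trilinear_forms)

lemma counitL: "sum_list (map (\<lambda>(a, b). sH (eps a) b) (cop x)) = x"
  and counitR: "sum_list (map (\<lambda>(a, b). sH (eps b) a) (cop x)) = x"
  and antipodeL: "sum_list (map (\<lambda>(a, b). S a * b) (cop x)) = sH (eps x) 1"
  and antipodeR: "sum_list (map (\<lambda>(a, b). a * S b) (cop x)) = sH (eps x) 1"
  using hopf_algebra by (simp_all add: hopf_algebra_def)

lemma C_counitL: "linear_form sH f \<Longrightarrow> C h (\<lambda>a b. eps a * f b) = f h"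
  using linear_form_sum2[of sH f "\<lambda>a b. sH (eps a) b" "cop h"] by (simp add: counitL linear_form_scale)

lemma C_counitR: "linear_form sH f \<Longrightarrow> C h (\<lambda>a b. eps b * f a) = f h"
  using linear_form_sum2[of sH f "\<lambda>a b. sH (eps b) a" "cop h"] by (simp add: counitR linear_form_scale)

lemma C_antipodeL: "linear_form sH f \<Longrightarrow> C h (\<lambda>a b. f (S a * b)) = eps h * f 1"
  using linear_form_sum2[of sH f "\<lambda>a b. S a * b" "cop h"] by (simp add: antipodeL linear_form_scale)

lemma C_antipodeR: "linear_form sH f \<Longrightarrow> C h (\<lambda>a b. f (a * S b)) = eps h * f 1"
  using linear_form_sum2[of sH f "\<lambda>a b. a * S b" "cop h"] by (simp add: antipodeR linear_form_scale)

lemmas hopf_form_simps = C_add C_smul ring_distribs bilinear_form_def linear_form_def trilinear_form_def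

lemma S_one [simp]: "S 1 = 1"
proof (rule eq_by_linear_forms_H)
  fix \<psi> assume \<psi>: "linear_form sH \<psi>"
  have "C 1 (\<lambda>a b. \<psi> (S a * b)) = \<psi> (S 1 * 1)"
    by (rule C_one) (use \<psi> in \<open>simp add: hopf_form_simps\<close>)
  moreover have "C 1 (\<lambda>a b. \<psi> (S a * b)) = eps 1 * \<psi> 1"
    by (rule C_antipodeL[OF \<psi>])
  ultimately show "\<psi> (S 1) = \<psi> 1" by simp
qed

lemma eps_S [simp]: "eps (S h) = eps h"
proof -
  have "C h (\<lambda>a b. eps (S a * b)) = eps h * eps 1"
    by (rule C_antipodeL[OF linear_form_eps])
  moreover have "C h (\<lambda>a b. eps b * eps (S a)) = eps (S h)"
    by (rule C_counitR) (simp add: linear_form_def)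
  ultimately show ?thesis by (simp add: mult.commute)
qed

lemma C_antipodeL_mult:
  assumes f: "linear_form sH f"
  shows "C v (\<lambda>v1 v2. C w (\<lambda>w1 w2. f (S (v1 * w1) * (v2 * w2)))) = eps v * eps w * f 1"
proof -
  have "C (v * w) (\<lambda>p q. f (S p * q)) = C v (\<lambda>v1 v2. C w (\<lambda>w1 w2. f (S (v1 * w1) * (v2 * w2))))"
    by (rule C_mult) (use f in \<open>simp add: hopf_form_simps\<close>)
  moreover have "C (v * w) (\<lambda>p q. f (S p * q)) = eps (v * w) * f 1"
    by (rule C_antipodeL[OF f])
  ultimately show ?thesis by simp
qed

lemma C_antipodeR_nested:
  assumes f: "linear_form sH f"
  shows "C x (\<lambda>x1 x2. C y (\<lambda>y1 y2. f (x1 * (y1 * (S y2 * S x2))))) = eps x * eps y * f 1"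
proof -
  have "C y (\<lambda>y1 y2. f (x1 * (y1 * (S y2 * S x2)))) = eps y * f (x1 * S x2)" for x1 x2
    using C_antipodeR[of "\<lambda>m. f (x1 * (m * S x2))" y] f by (simp add: hopf_form_simps mult.assoc)
  moreover have "C x (\<lambda>x1 x2. f (x1 * S x2)) = eps x * f 1"
    by (rule C_antipodeR[OF f])
  ultimately show ?thesis by (simp add: mult.commute mult.left_commute)
qed

lemma S_mult: "S (x * y) = S y * S x"
proof (rule eq_by_linear_forms_H)
  fix \<psi> assume \<psi>: "linear_form sH \<psi>"
  let ?T = "\<lambda>a b1 b2 c d1 d2. \<psi> (S (a * c) * (b1 * (d1 * (S d2 * S b2))))"
  have "\<psi> (S (x * y)) = C x (\<lambda>a b. C y (\<lambda>c d. eps b * (eps d * \<psi> (S (a * c)))))"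
  proof -
    have "\<psi> (S (a * y)) = C y (\<lambda>c d. eps d * \<psi> (S (a * c)))" for a
      by (rule C_counitR[symmetric]) (use \<psi> in \<open>simp add: hopf_form_simps\<close>)
    moreover have "\<psi> (S (x * y)) = C x (\<lambda>a b. eps b * \<psi> (S (a * y)))"
      by (rule C_counitR[symmetric]) (use \<psi> in \<open>simp add: hopf_form_simps\<close>)
    ultimately show ?thesis by simp
  qed
  also have "\<dots> = C x (\<lambda>a b. C y (\<lambda>c d. C b (\<lambda>b1 b2. C d (\<lambda>d1 d2. ?T a b1 b2 c d1 d2))))"
    using C_antipodeR_nested[of "\<lambda>m. \<psi> (S (_ * _) * m)"] \<psi> by (simp add: hopf_form_simps mult.assoc)
  also have "\<dots> = C x (\<lambda>a b. C b (\<lambda>b1 b2. C y (\<lambda>w d2. C w (\<lambda>c d1. ?T a b1 b2 c d1 d2))))"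
    using C_coassoc[of "\<lambda>c d1 d2. ?T _ _ _ c d1 d2" y, symmetric] \<psi>
    by (simp add: hopf_form_simps sum2_swap[of "cop y"])
  also have "\<dots> = C x (\<lambda>v b2. C y (\<lambda>w d2. C v (\<lambda>a b1. C w (\<lambda>c d1. ?T a b1 b2 c d1 d2))))"
    using C_coassoc[of "\<lambda>a b1 b2. C y (\<lambda>w d2. C w (\<lambda>c d1. ?T a b1 b2 c d1 d2))" x, symmetric] \<psi>
    by (simp add: hopf_form_simps sum2_swap[of "cop y"])
  also have "\<dots> = C x (\<lambda>v b2. C y (\<lambda>w d2. eps v * eps w * \<psi> (S d2 * S b2)))"
    using C_antipodeL_mult[of "\<lambda>m. \<psi> (m * (S _ * S _))"] \<psi> by (simp add: hopf_form_simps mult.assoc)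
  also have "\<dots> = \<psi> (S y * S x)"
  proof -
    have "C y (\<lambda>w d2. eps w * \<psi> (S d2 * S b2)) = \<psi> (S y * S b2)" for b2
      by (rule C_counitL) (use \<psi> in \<open>simp add: hopf_form_simps\<close>)
    moreover have "C x (\<lambda>v b2. eps v * \<psi> (S y * S b2)) = \<psi> (S y * S x)"
      by (rule C_counitL) (use \<psi> in \<open>simp add: hopf_form_simps\<close>)
    ultimately show ?thesis by (simp add: mult.assoc)
  qed
  finally show "\<psi> (S (x * y)) = \<psi> (S y * S x)" .
qed

lemma C_antipodeR_iterated:
  assumes G: "bilinear_form sH sH G"
  shows "C h (\<lambda>x l4. C x (\<lambda>l1 y. C y (\<lambda>l2 l3. G (l1 * S l4) (l2 * S l3)))) = eps h * G 1 1"
proof -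
  have "C y (\<lambda>l2 l3. G (l1 * S l4) (l2 * S l3)) = eps y * G (l1 * S l4) 1" for y l1 l4
    by (rule C_antipodeR) (use G in \<open>simp add: hopf_form_simps\<close>)
  moreover have "C x (\<lambda>l1 y. eps y * G (l1 * S l4) 1) = G (x * S l4) 1" for x l4
    by (rule C_counitR) (use G in \<open>simp add: hopf_form_simps\<close>)
  moreover have "C h (\<lambda>x l4. G (x * S l4) 1) = eps h * G 1 1"
    by (rule C_antipodeR) (use G in \<open>simp add: hopf_form_simps\<close>)
  ultimately show ?thesis by simp
qed

lemma C_S:
  assumes F: "bilinear_form sH sH F"
  shows "C (S h) F = C h (\<lambda>a b. F (S b) (S a))"
proof -
  let ?K = "\<lambda>h1 l1 l2 l3 l4. C (S h1) (\<lambda>u v. F (u * (l1 * S l4)) (v * (l2 * S l3)))"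
  have "C (S h) F = C h (\<lambda>h1 h2. eps h2 * C (S h1) F)"
    by (rule C_counitR[symmetric]) (use F in \<open>simp add: hopf_form_simps\<close>)
  also have "\<dots> = C h (\<lambda>h1 h2. C (S h1) (\<lambda>u v.
      C h2 (\<lambda>x l4. C x (\<lambda>l1 y. C y (\<lambda>l2 l3. F (u * (l1 * S l4)) (v * (l2 * S l3)))))))"
    using C_antipodeR_iterated[of "\<lambda>p q. F (_ * p) (_ * q)"] F by (simp add: hopf_form_simps)
  also have "\<dots> = C h (\<lambda>h1 h2. C h2 (\<lambda>x l4. C x (\<lambda>l1 y. C y (\<lambda>l2 l3. ?K h1 l1 l2 l3 l4))))"
    by (simp only: sum2_swap[of "cop (S _)"])
  also have "\<dots> = C h (\<lambda>h1 h2. C h2 (\<lambda>w v. C w (\<lambda>l1 l2. C v (\<lambda>l3 l4. ?K h1 l1 l2 l3 l4))))"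
    using C_coassoc[of "\<lambda>l1 l2 l3. ?K _ l1 l2 l3 _", symmetric]
      C_coassoc[of "\<lambda>w l3 l4. C w (\<lambda>l1 l2. ?K _ l1 l2 l3 l4)"] F
    by (simp add: hopf_form_simps sum2_swap[of "cop _" "cop _" "\<lambda>l3 l4 l1 l2. ?K _ l1 l2 l3 l4"])
  also have "\<dots> = C h (\<lambda>m r. C m (\<lambda>h1 l. C l (\<lambda>l1 l2. C r (\<lambda>l3 l4. ?K h1 l1 l2 l3 l4))))"
    by (rule C_coassoc[symmetric]) (use F in \<open>simp add: hopf_form_simps\<close>)
  also have "\<dots> = C h (\<lambda>m r. C m (\<lambda>h1 l. C (S h1 * l) (\<lambda>p q. C r (\<lambda>l3 l4. F (p * S l4) (q * S l3)))))"
    using C_mult[of "\<lambda>p q. C _ (\<lambda>l3 l4. F (p * S l4) (q * S l3))" "S _"] F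
    by (simp add: hopf_form_simps sum2_swap[of "cop (S _)"] mult.assoc)
  also have "\<dots> = C h (\<lambda>m r. eps m * C r (\<lambda>l3 l4. F (S l4) (S l3)))"
    using C_antipodeL[of "\<lambda>z. C z (\<lambda>p q. C _ (\<lambda>l3 l4. F (p * S l4) (q * S l3)))"]
      C_one[of "\<lambda>p q. C _ (\<lambda>l3 l4. F (p * S l4) (q * S l3))"] F
    by (simp add: hopf_form_simps)
  also have "\<dots> = C h (\<lambda>a b. F (S b) (S a))"
    by (rule C_counitL) (use F in \<open>simp add: hopf_form_simps\<close>)
  finally show ?thesis .
qed

lemma C_C_antipodeR_left:
  assumes G: "bilinear_form sH sH G"
  shows "C h (\<lambda>h1 v. C v (\<lambda>h2 h3. G (h1 * S h2) h3)) = G 1 h"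
proof -
  have "C h (\<lambda>h1 v. C v (\<lambda>h2 h3. G (h1 * S h2) h3)) = C h (\<lambda>w h3. C w (\<lambda>h1 h2. G (h1 * S h2) h3))"
    by (rule C_coassoc[symmetric]) (use G in \<open>simp add: hopf_form_simps\<close>)
  also have "\<dots> = C h (\<lambda>w h3. eps w * G 1 h3)"
    using C_antipodeR[of "\<lambda>m. G m _"] G by (simp add: hopf_form_simps)
  also have "\<dots> = G 1 h"
    by (rule C_counitL) (use G in \<open>simp add: hopf_form_simps\<close>)
  finally show ?thesis .
qed

end

locale hopf_bij = hopf +
  assumes bij_S: "bij S"
begin

lemma inv_S_S [simp]: "inv S (S x) = x"
  using bij_S by (simp add: bij_is_inj)

lemma S_inv_S [simp]: "S (inv S x) = x"
  using bij_S by (simp add: bij_is_surj surj_f_inv_f)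

lemma inv_S_add [simp]: "inv S (x + y) = inv S x + inv S y"
  by (metis S_add inv_S_S S_inv_S)

lemma inv_S_smul [simp]: "inv S (sH c x) = sH c (inv S x)"
  by (metis S_smul inv_S_S S_inv_S)

lemma inv_S_one [simp]: "inv S 1 = 1"
  by (metis S_one inv_S_S)

lemma eps_inv_S [simp]: "eps (inv S h) = eps h"
  by (metis eps_S S_inv_S)

lemma S_sum_list: "S (sum_list (map g xs)) = sum_list (map (\<lambda>x. S (g x)) xs)"
  by (induction xs) auto

lemma inv_antipodeL: "sum_list (map (\<lambda>(a, b). b * inv S a) (cop u)) = sH (eps u) 1"
proof -
  have "S (sum_list (map (\<lambda>(a, b). b * inv S a) (cop u))) = sum_list (map (\<lambda>(a, b). a * S b) (cop u))"
    by (simp add: S_sum_list S_mult case_prod_unfold)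
  also have "\<dots> = S (sH (eps u) 1)"
    by (simp add: antipodeR)
  finally show ?thesis by (metis inv_S_S)
qed

lemma inv_antipodeR: "sum_list (map (\<lambda>(a, b). inv S b * a) (cop u)) = sH (eps u) 1"
proof -
  have "S (sum_list (map (\<lambda>(a, b). inv S b * a) (cop u))) = sum_list (map (\<lambda>(a, b). S a * b) (cop u))"
    by (simp add: S_sum_list S_mult case_prod_unfold)
  also have "\<dots> = S (sH (eps u) 1)"
    by (simp add: antipodeL)
  finally show ?thesis by (metis inv_S_S)
qed

lemma C_inv_antipodeL: "linear_form sH f \<Longrightarrow> C u (\<lambda>a b. f (b * inv S a)) = eps u * f 1"
  using linear_form_sum2[of sH f "\<lambda>a b. b * inv S a" "cop u"] by (simp add: inv_antipodeL linear_form_scale)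

lemma C_inv_antipodeR: "linear_form sH f \<Longrightarrow> C u (\<lambda>a b. f (inv S b * a)) = eps u * f 1"
  using linear_form_sum2[of sH f "\<lambda>a b. inv S b * a" "cop u"] by (simp add: inv_antipodeR linear_form_scale)

lemma C_inv_S:
  assumes F: "bilinear_form sH sH F"
  shows "C (inv S h) F = C h (\<lambda>a b. F (inv S b) (inv S a))"
proof -
  have "C (S (inv S h)) (\<lambda>a b. F (inv S b) (inv S a)) = C (inv S h) (\<lambda>a b. F (inv S (S a)) (inv S (S b)))"
    by (rule C_S) (use F in \<open>simp add: hopf_form_simps\<close>)
  then show ?thesis by simp
qed

lemma C_C_inv_antipodeR_left:
  assumes G: "bilinear_form sH sH G"
  shows "C h (\<lambda>h1 v. C v (\<lambda>h2 h3. G (inv S h2 * h1) h3)) = G 1 h"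
proof -
  have "C h (\<lambda>h1 v. C v (\<lambda>h2 h3. G (inv S h2 * h1) h3)) = C h (\<lambda>w h3. C w (\<lambda>h1 h2. G (inv S h2 * h1) h3))"
    by (rule C_coassoc[symmetric]) (use G in \<open>simp add: hopf_form_simps\<close>)
  also have "\<dots> = C h (\<lambda>w h3. eps w * G 1 h3)"
    using C_inv_antipodeR[of "\<lambda>m. G m _"] G by (simp add: hopf_form_simps)
  also have "\<dots> = G 1 h"
    by (rule C_counitL) (use G in \<open>simp add: hopf_form_simps\<close>)
  finally show ?thesis .
qed

lemma C_C_inv_conj:
  assumes f: "linear_form sH f"
  shows "C h (\<lambda>u h3. C u (\<lambda>h1 h2. f (inv S (S h1 * (h3 * inv S h2))))) = f h"
proof -
  have "C h (\<lambda>u h3. C u (\<lambda>h1 h2. f (inv S (S h1 * (h3 * inv S h2)))))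
      = C h (\<lambda>h1 v. C v (\<lambda>h2 h3. f (inv S (S h1 * (h3 * inv S h2)))))"
    by (rule C_coassoc) (use f in \<open>simp add: hopf_form_simps\<close>)
  also have "\<dots> = C h (\<lambda>h1 v. eps v * f h1)"
    using C_inv_antipodeL[of "\<lambda>m. f (inv S (S _ * m))"] f by (simp add: hopf_form_simps)
  also have "\<dots> = f h"
    by (rule C_counitR[OF f])
  finally show ?thesis .
qed

lemma C_C_C_inv_conj:
  assumes G: "bilinear_form sH sH G"
  shows "C h (\<lambda>u h3. C u (\<lambda>h1 h2. C h2 (\<lambda>k1 k2. G (inv S (S h1 * (h3 * inv S k2))) k1))) = C h G"
proof -
  let ?G = "\<lambda>h1 k1 k2 h3. G (inv S (S h1 * (h3 * inv S k2))) k1"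
  have "C h (\<lambda>u h3. C u (\<lambda>h1 h2. C h2 (\<lambda>k1 k2. ?G h1 k1 k2 h3)))
      = C h (\<lambda>u h3. C u (\<lambda>w k2. C w (\<lambda>h1 k1. ?G h1 k1 k2 h3)))"
    using C_coassoc[of "\<lambda>h1 k1 k2. ?G h1 k1 k2 _", symmetric] G by (simp add: hopf_form_simps)
  also have "\<dots> = C h (\<lambda>w v. C v (\<lambda>k2 h3. C w (\<lambda>h1 k1. ?G h1 k1 k2 h3)))"
    by (rule C_coassoc) (use G in \<open>simp add: hopf_form_simps bilinear_form_fun_eqs[OF G]\<close>)
  also have "\<dots> = C h (\<lambda>w v. eps v * C w (\<lambda>h1 k1. G h1 k1))"
    using C_inv_antipodeL[of "\<lambda>m. C _ (\<lambda>h1 k1. G (inv S (S h1 * m)) k1)"] G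
    by (simp add: hopf_form_simps bilinear_form_fun_eqs[OF G])
  also have "\<dots> = C h G"
    by (rule C_counitR) (use G in \<open>simp add: hopf_form_simps\<close>)
  finally show ?thesis .
qed

end

locale qpb_connection =
  fixes sP :: "'k::field \<Rightarrow> 'p::ring_1 \<Rightarrow> 'p"
    and sH :: "'k \<Rightarrow> 'h::ring_1 \<Rightarrow> 'h"
    and cop :: "'h \<Rightarrow> ('h \<times> 'h) list"
    and eps :: "'h \<Rightarrow> 'k"
    and S :: "'h \<Rightarrow> 'h"
    and DR :: "'p \<Rightarrow> ('p \<times> 'h) list"
    and \<omega> :: "'h \<Rightarrow> ('p \<times> 'p) list"
  assumes qpb: "qpb sP sH cop eps S DR"
    and connection: "connection sP sH cop eps S DR \<omega>"

sublocale qpb_connection \<subseteq> hopf_bij sH cop eps S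
  using qpb by unfold_locales (simp_all add: qpb_def)

context qpb_connection
begin

abbreviation "R p F \<equiv> sum2 (DR p) F"
abbreviation "W h F \<equiv> sum2 (\<omega> h) F"
abbreviation "M \<equiv> coinv sP sH DR"

lemma comodule_algebra: "right_comodule_algebra sP sH cop eps DR"
  using qpb by (simp add: qpb_def)

lemma galois: "galois sP sH DR"
  using qpb by (simp add: qpb_def)

lemma k_algebra_P: "k_algebra sP"
  using comodule_algebra by (simp add: right_comodule_algebra_def)

lemma vector_space_P: "vector_space sP"
  using k_algebra_P by (simp add: k_algebra_def)

lemma sP_mult_left [simp]: "sP c x * y = sP c (x * y)"
  using k_algebra_P by (simp add: k_algebra_def)

lemma sP_mult_right [simp]: "x * sP c y = sP c (x * y)"
  using k_algebra_P by (simp add: k_algebra_def)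

lemma eq_by_linear_forms_P: "(\<And>\<psi>. linear_form sP \<psi> \<Longrightarrow> \<psi> x = \<psi> y) \<Longrightarrow> x = y"
  using eq_iff_linear_forms[OF vector_space_P] by blast

lemma R_add: "bilinear_form sP sH F \<Longrightarrow> R (x + y) F = R x F + R y F"
  and R_smul: "bilinear_form sP sH F \<Longrightarrow> R (sP c x) F = c * R x F"
  and R_mult: "bilinear_form sP sH F \<Longrightarrow> R (x * y) F = R x (\<lambda>a b. R y (\<lambda>a' b'. F (a * a') (b * b')))"
  and R_one: "bilinear_form sP sH F \<Longrightarrow> R 1 F = F 1 1"
  using comodule_algebra
  by (auto simp: right_comodule_algebra_def teq2_iff_bilinear_forms tmult_def bilinear_form_def linear_form_def)

lemma R_coassoc:
  "trilinear_form sP sH sH F \<Longrightarrow> R p (\<lambda>a g. R a (\<lambda>x g'. F x g' g)) = R p (\<lambda>a g. C g (\<lambda>h1 h2. F a h1 h2))"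
  using comodule_algebra by (simp add: right_comodule_algebra_def teq3_iff_trilinear_forms)

lemma R_counit: "linear_form sP f \<Longrightarrow> R p (\<lambda>a g. eps g * f a) = f p"
  using comodule_algebra linear_form_sum2[of sP f "\<lambda>a g. sP (eps g) a" "DR p"]
  by (simp add: right_comodule_algebra_def linear_form_scale)

lemma R_M: "m \<in> M \<Longrightarrow> bilinear_form sP sH F \<Longrightarrow> R m F = F m 1"
  by (simp add: coinv_def teq2_iff_bilinear_forms)

lemma W_add: "bilinear_form sP sP F \<Longrightarrow> W (x + y) F = W x F + W y F"
  and W_smul: "bilinear_form sP sP F \<Longrightarrow> W (sH c x) F = c * W x F"
  and W_one: "bilinear_form sP sP F \<Longrightarrow> W 1 F = 0"
  using connection by (auto simp: connection_def teq2_iff_bilinear_forms bilinear_form_def linear_form_def)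

lemma W_mult: "linear_form sP f \<Longrightarrow> W h (\<lambda>a b. f (a * b)) = 0"
  using connection linear_form_sum2[of sP f "\<lambda>a b. a * b" "\<omega> h"] linear_form_0[of sP f]
  by (simp add: connection_def)

lemma W_covariant:
  assumes G: "trilinear_form sP sP sH G"
  shows "W h (\<lambda>a b. R a (\<lambda>x g. R b (\<lambda>y g'. G x y (g * g'))))
    = C h (\<lambda>u h3. C u (\<lambda>h1 h2. W h2 (\<lambda>a b. G a b (S h1 * h3))))"
proof -
  have "sum3 (coact2 DR xs) G = sum2 xs (\<lambda>a b. R a (\<lambda>x g. R b (\<lambda>y g'. G x y (g * g'))))" for xs
    by (simp add: coact2_def)
  moreover have "sum3 (coact2 DR (\<omega> h)) G = C h (\<lambda>u h3. C u (\<lambda>h1 h2. W h2 (\<lambda>a b. G a b (S h1 * h3))))"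
    using connection G by (simp add: connection_def teq3_iff_trilinear_forms del: sum3_concat_map2)
  ultimately show ?thesis by simp
qed

lemmas form_simps = hopf_form_simps R_add R_smul W_add W_smul

definition D :: "'p \<Rightarrow> ('p \<times> 'p) list" where
  "D p = dP p @ tneg (Pi_om DR \<omega> (dP p))"

definition Dbar :: "'p \<Rightarrow> ('p \<times> 'p) list" where
  "Dbar p = dP p @ tneg (Pibar_om S DR \<omega> (dP p))"

definition cond_ii :: "'h \<Rightarrow> bool" where
  "cond_ii h \<longleftrightarrow> teq3 sH sP sP (lift_left (DL S DR) (\<omega> h))
     ([(h, 1, 1), (- sH (eps h) 1, 1, 1)] @ concat (map (\<lambda>(h1, h2). map (\<lambda>(a, b). (h1, a, b)) (\<omega> h2)) (cop h)))"

definition cond_iii :: "'h \<Rightarrow> bool" where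
  "cond_iii h \<longleftrightarrow> teq3 sP sP sH (lift_right DR (\<omega> h))
     ([(1, 1, h), (- sP (eps h) 1, 1, 1)] @ concat (map (\<lambda>(h1, h2). map (\<lambda>(a, b). (a, b, h2)) (\<omega> h1)) (cop h)))"

lemma left_strong_iff: "left_strong sP sH DR \<omega> \<longleftrightarrow> (\<forall>p. in_OmM_P sP M (D p))"
  by (simp add: left_strong_def D_def)

lemma linear_form_R: "bilinear_form sP sH F \<Longrightarrow> linear_form sP (\<lambda>p. R p F)"
  by (simp add: linear_form_def R_add R_smul)

lemma R_R_inv_antipodeL:
  assumes F: "bilinear_form sP sH F"
  shows "R b (\<lambda>y g. R y (\<lambda>y' g'. F y' (g * inv S g'))) = F b 1"
proof -
  have "R b (\<lambda>y g. R y (\<lambda>y' g'. F y' (g * inv S g'))) = R b (\<lambda>y g. C g (\<lambda>g1 g2. F y (g2 * inv S g1)))"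
    by (rule R_coassoc) (use F in \<open>simp add: form_simps\<close>)
  also have "\<dots> = R b (\<lambda>y g. eps g * F y 1)"
    using C_inv_antipodeL[of "F _"] F by (simp add: form_simps)
  also have "\<dots> = F b 1"
    by (rule R_counit) (use F in \<open>simp add: form_simps\<close>)
  finally show ?thesis .
qed

lemma R_R_inv_antipodeR:
  assumes F: "bilinear_form sP sH F"
  shows "R p (\<lambda>x g. R x (\<lambda>x' g'. F x' (inv S g * g'))) = F p 1"
proof -
  have "R p (\<lambda>x g. R x (\<lambda>x' g'. F x' (inv S g * g'))) = R p (\<lambda>x g. C g (\<lambda>g1 g2. F x (inv S g2 * g1)))"
    by (rule R_coassoc) (use F in \<open>simp add: form_simps\<close>)
  also have "\<dots> = R p (\<lambda>x g. eps g * F x 1)"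
    using C_inv_antipodeR[of "F _"] F by (simp add: form_simps)
  also have "\<dots> = F p 1"
    by (rule R_counit) (use F in \<open>simp add: form_simps\<close>)
  finally show ?thesis .
qed

lemma sum2_D:
  assumes F: "bilinear_form sP sP F"
  shows "sum2 (D p) F = F 1 p - F p 1 - R p (\<lambda>x g. W g (\<lambda>a b. F (x * a) b))"
proof -
  have "R 1 (\<lambda>x g. W g (\<lambda>a b. F (- p * x * a) b)) = W 1 (\<lambda>a b. F (- p * 1 * a) b)"
    by (rule R_one) (use F in \<open>simp add: form_simps bilinear_form_fun_eqs[OF F]\<close>)
  also have "\<dots> = 0"
    by (rule W_one) (use F in \<open>simp add: form_simps bilinear_form_fun_eqs[OF F]\<close>)
  finally show ?thesis
    by (simp add: D_def dP_def Pi_om_def bilinear_form_fun_eqs[OF F])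
qed

lemma sum2_Dbar:
  assumes F: "bilinear_form sP sP F"
  shows "sum2 (Dbar p) F = F 1 p - F p 1 + R p (\<lambda>x g. W (inv S g) (\<lambda>a b. F a (b * x)))"
proof -
  have "R 1 (\<lambda>x g. W (inv S g) (\<lambda>a b. F a (b * x * p))) = W (inv S 1) (\<lambda>a b. F a (b * 1 * p))"
    by (rule R_one) (use F in \<open>simp add: form_simps\<close>)
  also have "\<dots> = 0"
    using W_one[of "\<lambda>a b. F a (b * p)"] F by (simp add: form_simps)
  moreover have "R (- p) (\<lambda>x g. W (inv S g) (\<lambda>a b. F a (b * x))) = - R p (\<lambda>x g. W (inv S g) (\<lambda>a b. F a (b * x)))"
    by (rule linear_form_uminus[OF linear_form_R]) (use F in \<open>simp add: form_simps\<close>)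
  ultimately show ?thesis
    by (simp add: Dbar_def dP_def Pibar_om_def bilinear_form_fun_eqs[OF F])
qed

lemma mult_map_D: "mult_map (D p) = 0"
proof (rule eq_by_linear_forms_P)
  fix \<psi> assume \<psi>: "linear_form sP \<psi>"
  have "W g (\<lambda>a b. \<psi> (x * (a * b))) = 0" for g x
    by (rule W_mult[where f="\<lambda>m. \<psi> (x * m)"]) (use \<psi> in \<open>simp add: form_simps\<close>)
  then have "sum2 (D p) (\<lambda>a b. \<psi> (a * b)) = 0"
    using \<psi> by (simp add: sum2_D form_simps mult.assoc)
  then show "\<psi> (mult_map (D p)) = \<psi> 0"
    by (simp add: linear_form_sum2[OF \<psi>] linear_form_0[OF \<psi>])
qed

lemma mult_map_Dbar: "mult_map (Dbar p) = 0"
proof (rule eq_by_linear_forms_P)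
  fix \<psi> assume \<psi>: "linear_form sP \<psi>"
  have "W g (\<lambda>a b. \<psi> (a * (b * x))) = 0" for g x
    using W_mult[where f="\<lambda>m. \<psi> (m * x)"] \<psi> by (simp add: form_simps mult.assoc)
  then have "sum2 (Dbar p) (\<lambda>a b. \<psi> (a * b)) = 0"
    using \<psi> by (simp add: sum2_Dbar form_simps)
  then show "\<psi> (mult_map (Dbar p)) = \<psi> 0"
    by (simp add: linear_form_sum2[OF \<psi>] linear_form_0[OF \<psi>])
qed

lemma cond_ii_iff:
  "cond_ii h \<longleftrightarrow> (\<forall>\<gamma>. trilinear_form sH sP sP \<gamma> \<longrightarrow>
     W h (\<lambda>a b. R a (\<lambda>x g. \<gamma> (inv S g) x b)) = \<gamma> h 1 1 - eps h * \<gamma> 1 1 1 + C h (\<lambda>h1 h2. W h2 (\<gamma> h1)))"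
proof -
  have neg_eps: "\<gamma> (- sH (eps h) 1) 1 1 = - (eps h * \<gamma> 1 1 1)" if "trilinear_form sH sP sP \<gamma>" for \<gamma>
    using trilinear_form_fun_eqs(2,3)[OF that] by simp
  show ?thesis
    unfolding cond_ii_def teq3_iff_trilinear_forms by (auto simp: neg_eps)
qed

lemma cond_iii_iff:
  "cond_iii h \<longleftrightarrow> (\<forall>\<gamma>. trilinear_form sP sP sH \<gamma> \<longrightarrow>
     W h (\<lambda>a b. R b (\<gamma> a)) = \<gamma> 1 1 h - eps h * \<gamma> 1 1 1 + C h (\<lambda>h1 h2. W h1 (\<lambda>a b. \<gamma> a b h2)))"
proof -
  have neg_eps: "\<gamma> (- sP (eps h) 1) 1 1 = - (eps h * \<gamma> 1 1 1)" if "trilinear_form sP sP sH \<gamma>" for \<gamma>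
    using trilinear_form_fun_eqs(2,3)[OF that] by simp
  show ?thesis
    unfolding cond_iii_def teq3_iff_trilinear_forms by (auto simp: neg_eps)
qed

lemma in_M_iff: "m \<in> M \<longleftrightarrow> (\<forall>F. bilinear_form sP sH F \<longrightarrow> R m F = F m 1)"
  by (simp add: coinv_def teq2_iff_bilinear_forms)

lemma one_in_M: "1 \<in> M"
  by (simp add: in_M_iff R_one)

lemma minus_one_in_M: "- 1 \<in> M"
  by (simp add: in_M_iff R_one linear_form_uminus[OF linear_form_R] bilinear_form_fun_eqs)

lemma mult_map_teq2: "teq2 sP sP t zs \<Longrightarrow> mult_map t = mult_map zs"
proof (rule eq_by_linear_forms_P)
  fix \<psi> assume \<psi>: "linear_form sP \<psi>" and "teq2 sP sP t zs"
  moreover have "bilinear_form sP sP (\<lambda>a b. \<psi> (a * b))"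
    using \<psi> by (simp add: form_simps)
  ultimately show "\<psi> (mult_map t) = \<psi> (mult_map zs)"
    unfolding linear_form_sum2[OF \<psi>] teq2_iff_bilinear_forms by blast
qed

(* Each m (x) q is (m (x) 1 - 1 (x) m) q + 1 (x) m q, and the last terms add up to 1 (x) mult_map t = 0. *)
lemma in_OmM_P_intro:
  assumes zs: "set zs \<subseteq> M \<times> UNIV" "teq2 sP sP t zs" and mult: "mult_map t = 0"
  shows "in_OmM_P sP M t"
proof -
  define ys where "ys = map (\<lambda>(m, q). ([(m, 1), (- 1, m)], q)) zs"
  have "\<forall>(\<xi>, q) \<in> set ys. set \<xi> \<subseteq> M \<times> M \<and> mult_map \<xi> = 0"
    using zs(1) one_in_M minus_one_in_M by (auto simp: ys_def)
  moreover have "teq2 sP sP t (concat (map (\<lambda>(\<xi>, q). map (\<lambda>(m, n). (m, n * q)) \<xi>) ys))"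
    unfolding teq2_iff_bilinear_forms
  proof (intro allI impI)
    fix F assume F: "bilinear_form sP sP F"
    have "sum2 (concat (map (\<lambda>(\<xi>, q). map (\<lambda>(m, n). (m, n * q)) \<xi>) ys)) F
        = sum2 zs (\<lambda>m q. F m q - F 1 (m * q))"
      unfolding ys_def by (induction zs) (auto simp: bilinear_form_fun_eqs[OF F])
    also have "\<dots> = sum2 zs F - F 1 (mult_map zs)"
      by (simp add: linear_form_sum2[OF bilinear_formD2[OF F]])
    also have "\<dots> = sum2 t F"
      using mult mult_map_teq2[OF zs(2)] zs(2) F linear_form_0[OF bilinear_formD2[OF F]]
      by (simp add: teq2_iff_bilinear_forms)
    finally show "sum2 t F = sum2 (concat (map (\<lambda>(\<xi>, q). map (\<lambda>(m, n). (m, n * q)) \<xi>) ys)) F" ..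
  qed
  ultimately show ?thesis
    unfolding in_OmM_P_def by blast
qed

lemma in_P_OmM_intro:
  assumes zs: "set zs \<subseteq> UNIV \<times> M" "teq2 sP sP t zs" and mult: "mult_map t = 0"
  shows "in_P_OmM sP M t"
proof -
  define ys where "ys = map (\<lambda>(q, m). (q, [(1, m), (m, - 1)])) zs"
  have "\<forall>(q, \<xi>) \<in> set ys. set \<xi> \<subseteq> M \<times> M \<and> mult_map \<xi> = 0"
    using zs(1) one_in_M minus_one_in_M by (auto simp: ys_def)
  moreover have "teq2 sP sP t (concat (map (\<lambda>(q, \<xi>). map (\<lambda>(m, n). (q * m, n)) \<xi>) ys))"
    unfolding teq2_iff_bilinear_forms
  proof (intro allI impI)
    fix F assume F: "bilinear_form sP sP F"
    have minus: "F x (- 1) = - F x 1" for x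
      using linear_form_uminus[OF bilinear_formD2[OF F]] .
    have "sum2 (concat (map (\<lambda>(q, \<xi>). map (\<lambda>(m, n). (q * m, n)) \<xi>) ys)) F
        = sum2 zs (\<lambda>q m. F q m - F (q * m) 1)"
      unfolding ys_def by (induction zs) (auto simp: minus)
    also have "\<dots> = sum2 zs F - F (mult_map zs) 1"
      by (simp add: linear_form_sum2[OF bilinear_formD1[OF F]])
    also have "\<dots> = sum2 t F"
      using mult mult_map_teq2[OF zs(2)] zs(2) F linear_form_0[OF bilinear_formD1[OF F]]
      by (simp add: teq2_iff_bilinear_forms)
    finally show "sum2 t F = sum2 (concat (map (\<lambda>(q, \<xi>). map (\<lambda>(m, n). (q * m, n)) \<xi>) ys)) F" ..
  qed
  ultimately show ?thesis
    unfolding in_P_OmM_def by blast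
qed

lemma in_OmM_P_imp_left_legs_in_M:
  assumes "in_OmM_P sP M t"
  obtains zs where "set zs \<subseteq> M \<times> UNIV" "teq2 sP sP t zs"
proof -
  obtain ys :: "(('p \<times> 'p) list \<times> 'p) list" where
    ys: "\<forall>(\<xi>, q) \<in> set ys. set \<xi> \<subseteq> M \<times> M \<and> mult_map \<xi> = 0"
      "teq2 sP sP t (concat (map (\<lambda>(\<xi>, q). map (\<lambda>(m, n). (m, n * q)) \<xi>) ys))"
    using assms unfolding in_OmM_P_def by blast
  moreover have "set (concat (map (\<lambda>(\<xi>, q). map (\<lambda>(m, n). (m, n * q)) \<xi>) ys)) \<subseteq> M \<times> UNIV"
    using ys(1) by fastforce
  ultimately show thesis using that by blast
qed

(* M is the common kernel of the linear forms p \<mapsto> R p \<beta> - \<beta> p 1. *)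
lemma left_legs_in_M_if_coinvariant:
  assumes coinv: "\<And>\<gamma>. trilinear_form sP sH sP \<gamma> \<Longrightarrow>
    sum2 t (\<lambda>a b. R a (\<lambda>x g. \<gamma> x g b)) = sum2 t (\<lambda>a b. \<gamma> a 1 b)"
  obtains zs where "set zs \<subseteq> M \<times> UNIV" "teq2 sP sP t zs"
proof -
  let ?L = "\<lambda>\<beta> a. R a \<beta> - \<beta> a 1"
  have "\<exists>zs. set zs \<subseteq> {a. \<forall>\<beta>\<in>Collect (bilinear_form sP sH). ?L \<beta> a = 0} \<times> UNIV \<and> teq2 sP sP t zs"
  proof (rule teq2_left_legs_in_kernels[OF vector_space_P])
    fix \<beta> assume "\<beta> \<in> Collect (bilinear_form sP sH)"
    then show "linear_form sP (?L \<beta>)"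
      using linear_form_R bilinear_formD1 by (fastforce simp: linear_form_def algebra_simps)
  next
    fix \<beta> \<phi> assume \<beta>: "\<beta> \<in> Collect (bilinear_form sP sH)" and \<phi>: "linear_form sP \<phi>"
    have "sum2 t (\<lambda>a b. R a (\<lambda>x g. \<beta> x g * \<phi> b)) = sum2 t (\<lambda>a b. \<beta> a 1 * \<phi> b)"
      by (rule coinv) (use \<beta> \<phi> in \<open>simp add: form_simps\<close>)
    then show "sum2 t (\<lambda>a b. ?L \<beta> a * \<phi> b) = 0"
      by (simp add: left_diff_distrib)
  qed
  moreover have "{a. \<forall>\<beta>\<in>Collect (bilinear_form sP sH). ?L \<beta> a = 0} \<subseteq> M"
    by (auto simp: in_M_iff)
  ultimately show thesis using that by blast
qed

lemma right_legs_in_M_if_coinvariant: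
  assumes coinv: "\<And>\<gamma>. trilinear_form sP sP sH \<gamma> \<Longrightarrow>
    sum2 t (\<lambda>a b. R b (\<gamma> a)) = sum2 t (\<lambda>a b. \<gamma> a b 1)"
  obtains zs where "set zs \<subseteq> UNIV \<times> M" "teq2 sP sP t zs"
proof -
  obtain zs where zs: "set zs \<subseteq> M \<times> UNIV" "teq2 sP sP (map (\<lambda>(a, b). (b, a)) t) zs"
  proof (rule left_legs_in_M_if_coinvariant)
    fix \<gamma> assume "trilinear_form sP sH sP \<gamma>"
    then have "trilinear_form sP sP sH (\<lambda>b x g. \<gamma> x g b)"
      by (simp add: trilinear_form_def)
    then show "sum2 (map (\<lambda>(a, b). (b, a)) t) (\<lambda>a b. R a (\<lambda>x g. \<gamma> x g b))
        = sum2 (map (\<lambda>(a, b). (b, a)) t) (\<lambda>a b. \<gamma> a 1 b)"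
      using coinv by simp
  qed
  then have "teq2 sP sP t (map (\<lambda>(a, b). (b, a)) zs)"
    using teq2_flip[OF zs(2)] by (simp add: map_idI case_prod_beta)
  moreover have "set (map (\<lambda>(a, b). (b, a)) zs) \<subseteq> UNIV \<times> M"
    using zs(1) by auto
  ultimately show thesis using that by blast
qed

(* By covariance of \<omega>, p(0) \<omega>(p(1)) transforms like p(0) (x) p(1). *)
lemma Pi_om_total_coaction:
  assumes \<gamma>: "trilinear_form sP sP sH \<gamma>"
  shows "R p (\<lambda>x g. W g (\<lambda>a b. R (x * a) (\<lambda>u k. R b (\<lambda>y g'. \<gamma> u y (k * g')))))
       = R p (\<lambda>x g. C g (\<lambda>h2 h3. W h2 (\<lambda>a b. \<gamma> (x * a) b h3)))"
proof -
  note lin = form_simps trilinear_form_fun_eqs[OF \<gamma>]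
  let ?T = "\<lambda>x g1 h1 h2 h3. W h2 (\<lambda>a b. \<gamma> (x * a) b (g1 * (S h1 * h3)))"
  have "R p (\<lambda>x g. W g (\<lambda>a b. R (x * a) (\<lambda>u k. R b (\<lambda>y g'. \<gamma> u y (k * g')))))
      = R p (\<lambda>x g. R x (\<lambda>x' g1. W g (\<lambda>a b. R a (\<lambda>a' g2. R b (\<lambda>y g'. \<gamma> (x' * a') y (g1 * (g2 * g')))))))"
    using R_mult[of "\<lambda>u k. R _ (\<lambda>y g'. \<gamma> u y (k * g'))"] \<gamma>
    by (simp add: lin mult.assoc sum2_swap[of "\<omega> _"])
  also have "\<dots> = R p (\<lambda>x g. R x (\<lambda>x' g1. C g (\<lambda>u h3. C u (\<lambda>h1 h2. ?T x' g1 h1 h2 h3))))"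
    using W_covariant[of "\<lambda>a y k. \<gamma> (_ * a) y (_ * k)"] \<gamma> by (simp add: lin)
  also have "\<dots> = R p (\<lambda>x g. C g (\<lambda>g1 g0. C g0 (\<lambda>u h3. C u (\<lambda>h1 h2. ?T x g1 h1 h2 h3))))"
    by (rule R_coassoc) (use \<gamma> in \<open>simp add: lin\<close>)
  also have "\<dots> = R p (\<lambda>x g. C g (\<lambda>g1 g0. C g0 (\<lambda>h1 v. C v (\<lambda>h2 h3. ?T x g1 h1 h2 h3))))"
    using C_coassoc[of "\<lambda>h1 h2 h3. ?T _ _ h1 h2 h3"] \<gamma> by (simp add: lin)
  also have "\<dots> = R p (\<lambda>x g. C g (\<lambda>h2 h3. W h2 (\<lambda>a b. \<gamma> (x * a) b h3)))"
    using C_C_antipodeR_left[of "\<lambda>m v. C v (\<lambda>h2 h3. W h2 (\<lambda>a b. \<gamma> (_ * a) b (m * h3)))"] \<gamma>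
    by (simp add: lin mult.assoc)
  finally show ?thesis .
qed

definition iii_defect :: "('p \<Rightarrow> 'p \<Rightarrow> 'h \<Rightarrow> 'k) \<Rightarrow> 'h \<Rightarrow> 'k" where
  "iii_defect \<gamma> h = W h (\<lambda>a b. R b (\<gamma> a)) - (\<gamma> 1 1 h - eps h * \<gamma> 1 1 1 + C h (\<lambda>h1 h2. W h1 (\<lambda>a b. \<gamma> a b h2)))"

lemma cond_iii_iff_defect: "cond_iii h \<longleftrightarrow> (\<forall>\<gamma>. trilinear_form sP sP sH \<gamma> \<longrightarrow> iii_defect \<gamma> h = 0)"
  unfolding cond_iii_iff iii_defect_def by simp

(* The coactions on both factors and on the right factor alone agree on (Omega^1 M) P \<ni> D p. *)
lemma left_strong_imp_R_iii_defect:
  assumes "left_strong sP sH DR \<omega>" and \<gamma>: "trilinear_form sP sP sH \<gamma>"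
  shows "R p (\<lambda>x g. iii_defect (\<lambda>a. \<gamma> (x * a)) g) = 0"
proof -
  note lin = form_simps trilinear_form_fun_eqs[OF \<gamma>]
  obtain zs where zs: "set zs \<subseteq> M \<times> UNIV" "teq2 sP sP (D p) zs"
    using assms(1) in_OmM_P_imp_left_legs_in_M unfolding left_strong_iff by metis
  define Tot where "Tot a b = R a (\<lambda>x g. R b (\<lambda>y g'. \<gamma> x y (g * g')))" for a b
  define Right where "Right a b = R b (\<gamma> a)" for a b
  have Tot: "bilinear_form sP sP Tot" and Right: "bilinear_form sP sP Right"
    unfolding Tot_def Right_def using \<gamma> by (simp_all add: lin)
  have "Tot m b = Right m b" if "m \<in> M" for m b
    unfolding Tot_def Right_def by (subst R_M[OF that]) (use \<gamma> in \<open>simp_all add: lin\<close>)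
  then have "sum2 zs Tot = sum2 zs Right"
    using zs(1) by (intro sum2_cong) auto
  then have "sum2 (D p) Tot = sum2 (D p) Right"
    using zs(2) Tot Right by (simp add: teq2_iff_bilinear_forms)
  moreover have "Tot 1 p = R p (\<gamma> 1)" "Tot p 1 = R p (\<lambda>x g. \<gamma> x 1 g)" "Right p 1 = \<gamma> p 1 1"
    unfolding Tot_def Right_def using \<gamma> by (simp_all add: R_one lin)
  moreover have "R p (\<lambda>x g. W g (\<lambda>a b. Tot (x * a) b)) = R p (\<lambda>x g. C g (\<lambda>h2 h3. W h2 (\<lambda>a b. \<gamma> (x * a) b h3)))"
    unfolding Tot_def by (rule Pi_om_total_coaction[OF \<gamma>])
  moreover have "R p (\<lambda>x g. eps g * \<gamma> x 1 1) = \<gamma> p 1 1"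
    by (rule R_counit) (use \<gamma> in \<open>simp add: lin\<close>)
  ultimately show ?thesis
    unfolding sum2_D[OF Tot] sum2_D[OF Right] iii_defect_def
    by (simp add: Right_def[abs_def] algebra_simps)
qed

lemma left_strong_imp_cond_iii:
  assumes "left_strong sP sH DR \<omega>"
  shows "cond_iii h"
  unfolding cond_iii_iff_defect
proof (intro allI impI)
  fix \<gamma> assume \<gamma>: "trilinear_form sP sP sH \<gamma>"
  note lin = form_simps trilinear_form_fun_eqs[OF \<gamma>]
  define B where "B u g = iii_defect (\<lambda>a. \<gamma> (u * a)) g" for u g
  have B: "bilinear_form sP sH B"
    unfolding B_def iii_defect_def using \<gamma> by (simp add: lin)
  obtain xs where "teq2 sP sH (can_map DR xs) [(1, h)]"
    using galois unfolding galois_def by blast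
  then have "iii_defect \<gamma> h = sum2 (can_map DR xs) B"
    using B by (simp add: teq2_iff_bilinear_forms B_def)
  also have "\<dots> = sum2 xs (\<lambda>q p. R p (\<lambda>x g. iii_defect (\<lambda>a. \<gamma> (q * x * a)) g))"
    by (simp add: can_map_def B_def mult.assoc)
  also have "\<dots> = 0"
  proof -
    have "R p (\<lambda>x g. iii_defect (\<lambda>a. \<gamma> (q * x * a)) g) = 0" for q p
      using left_strong_imp_R_iii_defect[OF assms, of "\<lambda>a. \<gamma> (q * a)" p] \<gamma> by (simp add: lin mult.assoc)
    then show ?thesis by simp
  qed
  finally show "iii_defect \<gamma> h = 0" .
qed

lemma cond_iii_imp_cond_ii:
  assumes iii: "\<And>h. cond_iii h"
  shows "cond_ii h"
  unfolding cond_ii_iff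
proof (intro allI impI)
  fix \<gamma> assume \<gamma>: "trilinear_form sH sP sP \<gamma>"
  note lin = form_simps trilinear_form_fun_eqs[OF \<gamma>]
  let ?\<gamma> = "\<lambda>k a y g. \<gamma> (inv S (k * inv S g)) a y"
  have iii': "W h2 (\<lambda>a b. R b (?\<gamma> k a)) = ?\<gamma> k 1 1 h2 - eps h2 * ?\<gamma> k 1 1 1 + C h2 (\<lambda>k1 k2. W k1 (\<lambda>a b. ?\<gamma> k a b k2))"
    for h2 k
    using iii[of h2] \<gamma> unfolding cond_iii_iff by (simp add: lin)
  have "W h (\<lambda>a b. R a (\<lambda>x g. \<gamma> (inv S g) x b))
      = W h (\<lambda>a b. R a (\<lambda>x g. R b (\<lambda>y g'. R y (\<lambda>y' g''. \<gamma> (inv S (g * g' * inv S g'')) x y'))))"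
    using R_R_inv_antipodeL[of "\<lambda>y' k. \<gamma> (inv S (_ * k)) _ y'"] \<gamma> by (simp add: lin mult.assoc)
  also have "\<dots> = C h (\<lambda>u h3. C u (\<lambda>h1 h2. W h2 (\<lambda>a b. R b (?\<gamma> (S h1 * h3) a))))"
    by (rule W_covariant[of "\<lambda>x y k. R y (?\<gamma> k x)"]) (use \<gamma> in \<open>simp add: lin\<close>)
  also have "\<dots> = C h (\<lambda>u h3. C u (\<lambda>h1 h2. \<gamma> (inv S (S h1 * (h3 * inv S h2))) 1 1))
      - C h (\<lambda>u h3. C u (\<lambda>h1 h2. eps h2 * \<gamma> (inv S (S h1 * h3)) 1 1))
      + C h (\<lambda>u h3. C u (\<lambda>h1 h2. C h2 (\<lambda>k1 k2. W k1 (\<gamma> (inv S (S h1 * (h3 * inv S k2)))))))"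
    by (simp only: iii') (simp add: mult.assoc)
  also have "\<dots> = \<gamma> h 1 1 - eps h * \<gamma> 1 1 1 + C h (\<lambda>h1 h2. W h2 (\<gamma> h1))"
  proof -
    have "C h (\<lambda>u h3. C u (\<lambda>h1 h2. \<gamma> (inv S (S h1 * (h3 * inv S h2))) 1 1)) = \<gamma> h 1 1"
      by (rule C_C_inv_conj) (use \<gamma> in \<open>simp add: lin\<close>)
    moreover have "C h (\<lambda>u h3. C u (\<lambda>h1 h2. eps h2 * \<gamma> (inv S (S h1 * h3)) 1 1)) = eps h * \<gamma> 1 1 1"
      using C_counitR[of "\<lambda>u. \<gamma> (inv S (S u * _)) 1 1"] C_antipodeL[of "\<lambda>m. \<gamma> (inv S m) 1 1" h] \<gamma>
      by (simp add: lin)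
    moreover have "C h (\<lambda>u h3. C u (\<lambda>h1 h2. C h2 (\<lambda>k1 k2. W k1 (\<gamma> (inv S (S h1 * (h3 * inv S k2)))))))
        = C h (\<lambda>h1 h2. W h2 (\<gamma> h1))"
      by (rule C_C_C_inv_conj) (use \<gamma> in \<open>simp add: lin\<close>)
    ultimately show ?thesis by simp
  qed
  finally show "W h (\<lambda>a b. R a (\<lambda>x g. \<gamma> (inv S g) x b)) = \<gamma> h 1 1 - eps h * \<gamma> 1 1 1 + C h (\<lambda>h1 h2. W h2 (\<gamma> h1))" .
qed

lemma cond_ii_imp_left_strong:
  assumes ii: "\<And>h. cond_ii h"
  shows "left_strong sP sH DR \<omega>"
  unfolding left_strong_iff
proof
  fix p
  obtain zs where "set zs \<subseteq> M \<times> UNIV" "teq2 sP sP (D p) zs"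
  proof (rule left_legs_in_M_if_coinvariant)
    fix \<gamma> assume \<gamma>: "trilinear_form sP sH sP \<gamma>"
    note lin = form_simps trilinear_form_fun_eqs[OF \<gamma>]
    have ii': "W g0 (\<lambda>a b. R a (\<lambda>a' g2. \<gamma> (x * a') (g1 * g2) b))
        = \<gamma> x (g1 * S g0) 1 - eps g0 * \<gamma> x g1 1 + C g0 (\<lambda>h1 h2. W h2 (\<lambda>a b. \<gamma> (x * a) (g1 * S h1) b))"
      for x g1 g0
      using ii[of g0, unfolded cond_ii_iff, rule_format, of "\<lambda>u a' b. \<gamma> (x * a') (g1 * S u) b"] \<gamma>
      by (simp add: lin)
    have "R p (\<lambda>x g. W g (\<lambda>a b. R (x * a) (\<lambda>u k. \<gamma> u k b)))
        = R p (\<lambda>x0 g0. R x0 (\<lambda>x g1. W g0 (\<lambda>a b. R a (\<lambda>a' g2. \<gamma> (x * a') (g1 * g2) b))))"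
      using R_mult[of "\<lambda>u k. \<gamma> u k _"] \<gamma> by (simp add: lin sum2_swap[of "\<omega> _"])
    also have "\<dots> = R p (\<lambda>x g. C g (\<lambda>g1 g0.
        \<gamma> x (g1 * S g0) 1 - eps g0 * \<gamma> x g1 1 + C g0 (\<lambda>h1 h2. W h2 (\<lambda>a b. \<gamma> (x * a) (g1 * S h1) b))))"
      unfolding ii' by (rule R_coassoc) (use \<gamma> in \<open>simp add: lin\<close>)
    also have "\<dots> = R p (\<lambda>x g. eps g * \<gamma> x 1 1 - \<gamma> x g 1 + W g (\<lambda>a b. \<gamma> (x * a) 1 b))"
      using C_antipodeR[of "\<lambda>m. \<gamma> _ m 1"] C_counitR[of "\<lambda>g1. \<gamma> _ g1 1"]
        C_C_antipodeR_left[of "\<lambda>m h2. W h2 (\<lambda>a b. \<gamma> (_ * a) m b)"] \<gamma>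
      by (simp add: lin)
    also have "\<dots> = \<gamma> p 1 1 - R p (\<lambda>x g. \<gamma> x g 1) + R p (\<lambda>x g. W g (\<lambda>a b. \<gamma> (x * a) 1 b))"
      using R_counit[of "\<lambda>x. \<gamma> x 1 1" p] \<gamma> by (simp add: lin)
    finally have "R p (\<lambda>x g. W g (\<lambda>a b. R (x * a) (\<lambda>u k. \<gamma> u k b)))
        = \<gamma> p 1 1 - R p (\<lambda>x g. \<gamma> x g 1) + R p (\<lambda>x g. W g (\<lambda>a b. \<gamma> (x * a) 1 b))" .
    then show "sum2 (D p) (\<lambda>a b. R a (\<lambda>x g. \<gamma> x g b)) = sum2 (D p) (\<lambda>a b. \<gamma> a 1 b)"
      using \<gamma> by (simp add: sum2_D lin R_one)
  qed
  then show "in_OmM_P sP M (D p)"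
    using in_OmM_P_intro mult_map_D by blast
qed

lemma R_C_inv_S_W:
  assumes \<gamma>: "trilinear_form sP sP sH \<gamma>"
  shows "R p (\<lambda>x g. C (inv S g) (\<lambda>k1 k2. W k1 (\<lambda>a b. R x (\<lambda>x' g'. \<gamma> a (b * x') (k2 * g')))))
    = R p (\<lambda>x g. W (inv S g) (\<lambda>a b. \<gamma> a (b * x) 1))"
proof -
  note lin = form_simps trilinear_form_fun_eqs[OF \<gamma>]
  let ?T = "\<lambda>x h1 h2 g'. W (inv S h2) (\<lambda>a b. \<gamma> a (b * x) (inv S h1 * g'))"
  have "R p (\<lambda>x g. C (inv S g) (\<lambda>k1 k2. W k1 (\<lambda>a b. R x (\<lambda>x' g'. \<gamma> a (b * x') (k2 * g')))))
      = R p (\<lambda>x g. R x (\<lambda>x' g'. C g (\<lambda>h1 h2. ?T x' h1 h2 g')))"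
    using C_inv_S[of "\<lambda>k1 k2. W k1 (\<lambda>a b. R _ (\<lambda>x' g'. \<gamma> a (b * x') (k2 * g')))"] \<gamma>
    by (simp add: lin sum2_swap[of "\<omega> _"] sum2_swap[of "cop _"])
  also have "\<dots> = R p (\<lambda>x g. C g (\<lambda>g' v. C v (\<lambda>h1 h2. ?T x h1 h2 g')))"
    by (rule R_coassoc) (use \<gamma> in \<open>simp add: lin\<close>)
  also have "\<dots> = R p (\<lambda>x g. W (inv S g) (\<lambda>a b. \<gamma> a (b * x) 1))"
    using C_C_inv_antipodeR_left[of "\<lambda>m h2. W (inv S h2) (\<lambda>a b. \<gamma> a (b * _) m)"] \<gamma>
    by (simp add: lin)
  finally show ?thesis .
qed

lemma cond_iii_imp_Dbar_in_P_OmM: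
  assumes iii: "\<And>h. cond_iii h"
  shows "in_P_OmM sP M (Dbar p)"
proof -
  obtain zs where "set zs \<subseteq> UNIV \<times> M" "teq2 sP sP (Dbar p) zs"
  proof (rule right_legs_in_M_if_coinvariant)
    fix \<gamma> assume \<gamma>: "trilinear_form sP sP sH \<gamma>"
    note lin = form_simps trilinear_form_fun_eqs[OF \<gamma>]
    have iii': "W k (\<lambda>a b. R (b * x) (\<gamma> a)) = R x (\<lambda>x' g. \<gamma> 1 x' (k * g)) - eps k * R x (\<gamma> 1)
        + C k (\<lambda>k1 k2. W k1 (\<lambda>a b. R x (\<lambda>x' g. \<gamma> a (b * x') (k2 * g))))" for k x
      using iii[of k, unfolded cond_iii_iff, rule_format, of "\<lambda>a b' g1. R x (\<lambda>x' g2. \<gamma> a (b' * x') (g1 * g2))"] \<gamma>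
      by (simp add: lin R_mult)
    have "R p (\<lambda>x g. W (inv S g) (\<lambda>a b. R (b * x) (\<gamma> a)))
        = R p (\<lambda>x g. R x (\<lambda>x' g'. \<gamma> 1 x' (inv S g * g'))) - R p (\<lambda>x g. eps g * R x (\<gamma> 1))
          + R p (\<lambda>x g. C (inv S g) (\<lambda>k1 k2. W k1 (\<lambda>a b. R x (\<lambda>x' g'. \<gamma> a (b * x') (k2 * g')))))"
      by (simp add: iii')
    also have "\<dots> = \<gamma> 1 p 1 - R p (\<gamma> 1) + R p (\<lambda>x g. W (inv S g) (\<lambda>a b. \<gamma> a (b * x) 1))"
      using R_R_inv_antipodeR[of "\<gamma> 1" p] R_counit[of "\<lambda>x. R x (\<gamma> 1)" p] R_C_inv_S_W[OF \<gamma>] \<gamma>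
      by (simp add: lin)
    finally have "R p (\<lambda>x g. W (inv S g) (\<lambda>a b. R (b * x) (\<gamma> a)))
        = \<gamma> 1 p 1 - R p (\<gamma> 1) + R p (\<lambda>x g. W (inv S g) (\<lambda>a b. \<gamma> a (b * x) 1))" .
    then show "sum2 (Dbar p) (\<lambda>a b. R b (\<gamma> a)) = sum2 (Dbar p) (\<lambda>a b. \<gamma> a b 1)"
      using \<gamma> by (simp add: sum2_Dbar lin R_one)
  qed
  then show ?thesis
    using in_P_OmM_intro mult_map_Dbar by blast
qed

end

theorem proposition3p4:
  fixes sP :: "'k::field \<Rightarrow> 'p::ring_1 \<Rightarrow> 'p"
    and sH :: "'k \<Rightarrow> 'h::ring_1 \<Rightarrow> 'h"
    and cop :: "'h \<Rightarrow> ('h \<times> 'h) list"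
    and eps :: "'h \<Rightarrow> 'k"
    and S :: "'h \<Rightarrow> 'h"
    and DR :: "'p \<Rightarrow> ('p \<times> 'h) list"
    and \<omega> :: "'h \<Rightarrow> ('p \<times> 'p) list"
  assumes qpb_assm: "qpb sP sH cop eps S DR"
    and conn: "connection sP sH cop eps S DR \<omega>"
  shows "(left_strong sP sH DR \<omega> \<longleftrightarrow>
            (\<forall>h. teq3 sH sP sP (lift_left (DL S DR) (\<omega> h))
               ([(h, 1, 1), (- sH (eps h) 1, 1, 1)]
                @ concat (map (\<lambda>(h1, h2). map (\<lambda>(a, b). (h1, a, b)) (\<omega> h2)) (cop h)))))
       \<and> (left_strong sP sH DR \<omega> \<longleftrightarrow>
            (\<forall>h. teq3 sP sP sH (lift_right DR (\<omega> h))
               ([(1, 1, h), (- sP (eps h) 1, 1, 1)]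
                @ concat (map (\<lambda>(h1, h2). map (\<lambda>(a, b). (a, b, h2)) (\<omega> h1)) (cop h)))))
       \<and> (left_strong sP sH DR \<omega> \<longrightarrow>
            (\<forall>p. in_P_OmM sP (coinv sP sH DR) (dP p @ tneg (Pibar_om S DR \<omega> (dP p)))))"
proof -
  interpret qpb_connection sP sH cop eps S DR \<omega>
    using qpb_assm conn by unfold_locales
  have "left_strong sP sH DR \<omega> \<longleftrightarrow> (\<forall>h. cond_ii h)" "left_strong sP sH DR \<omega> \<longleftrightarrow> (\<forall>h. cond_iii h)"
    using left_strong_imp_cond_iii cond_iii_imp_cond_ii cond_ii_imp_left_strong by blast+
  moreover have "left_strong sP sH DR \<omega> \<longrightarrow> (\<forall>p. in_P_OmM sP M (Dbar p))"
    using left_strong_imp_cond_iii cond_iii_imp_Dbar_in_P_OmM by blast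
  ultimately show ?thesis
    unfolding cond_ii_def cond_iii_def Dbar_def by blast
qed

end
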